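(* Let $\Omega\subset B(\mathcal H)^d$ be an NC domain and $f:\Omega\to B(\mathcal H)^r$ an NC function. Then $f$ is continuous with respect to the norm topologies and Gâteaux differentiable, i.e. for all $x\in\Omega$ and $h\in B(\mathcal H)^d$ the limit $\lim_{t\to0,\,t\in\mathbb C}\frac{f(x+th)-f(x)}{t}$ exists in norm. Consequently $f$ is Fréchet differentiable on $\Omega$.
   Context: Throughout, $\mathcal H$ is an infinite-dimensional separable complex Hilbert space, $B(\mathcal H)$ the bounded operators with the operator norm, and $\mathcal H^{(l)}$ ($l\in\mathbb N\cup\{\infty\}$) the direct sum of $l$ copies of $\mathcal H$. $B(\mathcal H)^d$ has the norm $\|x\|=\max_i\|x^i\|$. Operations on tuples are componentwise: for bounded invertible linear $s:\mathcal H\to\mathcal H^{(l)}$ and $z\in B(\mathcal H^{(l)})^d$, $s^{-1}zs=(s^{-1}z^1s,\dots,s^{-1}z^ds)$; for a finite or countable uniformly bounded sequence $x_1,x_2,\dots$ in $B(\mathcal H)^d$ of length $l$, $\bigoplus_n x_n\in B(\mathcal H^{(l)})^d$ has $i$-th entry $\bigoplus_n x_n^i$; block matrices of tuples are defined entrywise per coordinate. A set is unitarily invariant if $u^*xu$ lies in it for each of its elements $x$ and each unitary $u\in B(\mathcal H)$. NC domain: $\Omega\subset B(\mathcal H)^d$ is an NC domain if there are subsets $\Omega_1,\Omega_2,\dots$ of $\Omega$ with (1) $\Omega_k\subset\mathrm{int}\,\Omega_{k+1}$ (norm interior) and $\Omega=\bigcup_k\Omega_k$; (2) each $\Omega_k$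 norm-bounded and unitarily invariant; (3) for every sequence $x_1,x_2,\dots$ in $\Omega_k$ of length $l\in\mathbb N\cup\{\infty\}$ there is a unitary $u:\mathcal H\to\mathcal H^{(l)}$ with $u^{-1}(\bigoplus_n x_n)u\in\Omega_k$. NC function: $f:\Omega\to B(\mathcal H)^r$ on an NC domain is NC if whenever $x,y\in\Omega$ and $s:\mathcal H\to\mathcal H^{(2)}$ is bounded, linear, invertible with $s^{-1}\begin{bmatrix}x&0\\0&y\end{bmatrix}s\in\Omega$, then $f\Big(s^{-1}\begin{bmatrix}x&0\\0&y\end{bmatrix}s\Big)=s^{-1}\begin{bmatrix}f(x)&0\\0&f(y)\end{bmatrix}s$. *)

theory Defs
  imports "HOL-Analysis.Analysis" "HOL-Library.Extended_Nat"
begin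

text \<open>Concrete model: the infinite-dimensional separable complex Hilbert space H is
  l2(nat); H^(l) is l2 of the index set {(n,k). n < l} (l a natural number or infinity).
  Vectors are functions into complex vanishing off the index set; operators are
  functions on vectors that are extensional (zero off l2).\<close>

type_synonym 'i vec = "'i \<Rightarrow> complex"
type_synonym 'i op = "'i vec \<Rightarrow> 'i vec"
type_synonym 'i tup = "nat \<Rightarrow> 'i op"

definition l2 :: "'i set \<Rightarrow> 'i vec set" where
  "l2 I = {v. (\<forall>i. i \<notin> I \<longrightarrow> v i = 0) \<and> (\<lambda>i. (cmod (v i))^2) summable_on UNIV}"

definition l2norm :: "'i vec \<Rightarrow> real" where
  "l2norm v = sqrt (infsum (\<lambda>i. (cmod (v i))^2) UNIV)"

definition bop :: "'i set \<Rightarrow> 'j set \<Rightarrow> ('i vec \<Rightarrow> 'j vec) set" where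
  "bop I J = {T. (\<forall>v\<in>l2 I. T v \<in> l2 J)
     \<and> (\<forall>v. v \<notin> l2 I \<longrightarrow> T v = (\<lambda>_. 0))
     \<and> (\<forall>u\<in>l2 I. \<forall>v\<in>l2 I. \<forall>a b. T (\<lambda>i. a * u i + b * v i) = (\<lambda>j. a * T u j + b * T v j))
     \<and> (\<exists>C. \<forall>v\<in>l2 I. l2norm (T v) \<le> C * l2norm v)}"

definition opnorm :: "'i set \<Rightarrow> ('i vec \<Rightarrow> 'j vec) \<Rightarrow> real" where
  "opnorm I T = Sup ((\<lambda>v. l2norm (T v)) ` {v \<in> l2 I. l2norm v \<le> 1})"

definition inv_pair :: "'i set \<Rightarrow> 'j set \<Rightarrow> ('i vec \<Rightarrow> 'j vec) \<Rightarrow> ('j vec \<Rightarrow> 'i vec) \<Rightarrow> bool" where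
  "inv_pair I J s t \<longleftrightarrow> s \<in> bop I J \<and> t \<in> bop J I
     \<and> (\<forall>v\<in>l2 I. t (s v) = v) \<and> (\<forall>w\<in>l2 J. s (t w) = w)"

definition unitary_pair :: "'i set \<Rightarrow> 'j set \<Rightarrow> ('i vec \<Rightarrow> 'j vec) \<Rightarrow> ('j vec \<Rightarrow> 'i vec) \<Rightarrow> bool" where
  "unitary_pair I J u t \<longleftrightarrow> inv_pair I J u t \<and> (\<forall>v\<in>l2 I. l2norm (u v) = l2norm v)"

definition BT :: "nat \<Rightarrow> 'j set \<Rightarrow> 'j tup set" where
  "BT d J = {x. (\<forall>i<d. x i \<in> bop J J) \<and> (\<forall>i\<ge>d. x i = (\<lambda>v. \<lambda>_. 0))}"

definition tnorm :: "nat \<Rightarrow> 'j set \<Rightarrow> 'j tup \<Rightarrow> real" where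
  "tnorm d J x = Max (insert 0 ((\<lambda>i. opnorm J (x i)) ` {..<d}))"

definition tadd :: "'j tup \<Rightarrow> 'j tup \<Rightarrow> 'j tup" where
  "tadd x y = (\<lambda>i v j. x i v j + y i v j)"

definition tsub :: "'j tup \<Rightarrow> 'j tup \<Rightarrow> 'j tup" where
  "tsub x y = (\<lambda>i v j. x i v j - y i v j)"

definition tscale :: "complex \<Rightarrow> 'j tup \<Rightarrow> 'j tup" where
  "tscale c x = (\<lambda>i v j. c * x i v j)"

text \<open>s^{-1} z s, where t is the inverse of s.\<close>
definition conj :: "('b vec \<Rightarrow> 'a vec) \<Rightarrow> 'b tup \<Rightarrow> ('a vec \<Rightarrow> 'b vec) \<Rightarrow> 'a tup" where
  "conj t z s = (\<lambda>i. t \<circ> z i \<circ> s)"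

definition Jset :: "enat \<Rightarrow> (nat \<times> nat) set" where
  "Jset l = {(n, k). enat n < l}"

text \<open>Direct sum of a sequence x_0, x_1, ... of length l, acting on H^(l) = l2 (Jset l).\<close>
definition dsum :: "enat \<Rightarrow> (nat \<Rightarrow> nat tup) \<Rightarrow> (nat \<times> nat) tup" where
  "dsum l x = (\<lambda>i v. if v \<in> l2 (Jset l)
      then (\<lambda>(n, k). if enat n < l then x n i (\<lambda>k'. v (n, k')) k else 0)
      else (\<lambda>_. 0))"

definition pair2 :: "nat tup \<Rightarrow> nat tup \<Rightarrow> nat \<Rightarrow> nat tup" where
  "pair2 x y = (\<lambda>n. if n = 0 then x else y)"

type_synonym H = nat

definition nc_domain :: "nat \<Rightarrow> H tup set \<Rightarrow> bool" where
  "nc_domain d \<Omega> \<longleftrightarrow> \<Omega> \<subseteq> BT d (UNIV :: H set) \<and>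
    (\<exists>\<Omega>s :: nat \<Rightarrow> H tup set.
       (\<forall>k. \<Omega>s k \<subseteq> \<Omega>) \<and> \<Omega> = (\<Union>k. \<Omega>s k)
     \<and> (\<forall>k. \<forall>x\<in>\<Omega>s k. \<exists>\<epsilon>>0. \<forall>y\<in>BT d UNIV. tnorm d UNIV (tsub y x) < \<epsilon> \<longrightarrow> y \<in> \<Omega>s (Suc k))
     \<and> (\<forall>k. \<exists>C. \<forall>x\<in>\<Omega>s k. tnorm d UNIV x \<le> C)
     \<and> (\<forall>k. \<forall>x\<in>\<Omega>s k. \<forall>u t. unitary_pair (UNIV :: H set) UNIV u t \<longrightarrow> conj t x u \<in> \<Omega>s k)
     \<and> (\<forall>k. \<forall>l::enat. 1 \<le> l \<longrightarrow> (\<forall>x. (\<forall>n. enat n < l \<longrightarrow> x n \<in> \<Omega>s k) \<longrightarrow>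
          (\<exists>u t. unitary_pair (UNIV :: H set) (Jset l) u t \<and> conj t (dsum l x) u \<in> \<Omega>s k))))"

definition nc_function :: "nat \<Rightarrow> nat \<Rightarrow> H tup set \<Rightarrow> (H tup \<Rightarrow> H tup) \<Rightarrow> bool" where
  "nc_function d r \<Omega> f \<longleftrightarrow> (\<forall>x\<in>\<Omega>. f x \<in> BT r UNIV) \<and>
    (\<forall>x\<in>\<Omega>. \<forall>y\<in>\<Omega>. \<forall>s t. inv_pair (UNIV :: H set) (Jset 2) s t
        \<and> conj t (dsum 2 (pair2 x y)) s \<in> \<Omega> \<longrightarrow>
        f (conj t (dsum 2 (pair2 x y)) s) = conj t (dsum 2 (pair2 (f x) (f y))) s)"

end

theory Submission
  imports Defs
begin

text \<open>Everything rests on the NC property applied to two kinds of similarity.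
  For \<open>y, y'\<close> and a scalar \<open>c\<close>, the shear \<open>[[1, c], [0, 1]]\<close> conjugates \<open>y \<oplus> y'\<close> into
  \<open>[[y, c (y - y')], [0, y']]\<close>, so \<open>f\<close> of this matrix is \<open>[[f y, c (f y - f y')], [0, f y']]\<close>.
  For infinite direct sums: were \<open>f\<close> unbounded on a level \<open>\<Omega>\<^sub>k\<close>, pick \<open>z\<^sub>n \<in> \<Omega>\<^sub>k\<close> with
  \<open>\<parallel>f z\<^sub>n\<parallel> > n\<close> and let \<open>Y\<^sub>m \<in> \<Omega>\<^sub>k\<close> be a unitary conjugate of \<open>\<Oplus>\<^sub>n\<^sub>\<ge>\<^sub>m z\<^sub>n\<close>. As \<open>Y\<^sub>m\<close>
  is similar to \<open>z\<^sub>m \<oplus> Y\<^sub>m\<^sub>+\<^sub>1\<close> by a contraction with contractive inverse,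
  \<open>\<parallel>f z\<^sub>m\<parallel> \<le> \<parallel>f Y\<^sub>m\<parallel> \<le> \<parallel>f Y\<^sub>0\<parallel>\<close> for all \<open>m\<close>, which is absurd. So \<open>f\<close> is bounded by some \<open>M\<close>
  on each level; since the triangular matrix stays in the next level for \<open>y, y'\<close> near a
  point and \<open>\<bar>c\<bar> \<approx> \<epsilon> / \<parallel>y - y'\<parallel>\<close>, this gives \<open>\<parallel>f y - f y'\<parallel> \<le> (3 M / \<epsilon>) \<parallel>y - y'\<parallel>\<close>.

  For the derivative at \<open>x\<close> let \<open>G h\<close> be the (1,2) entry of \<open>f [[x, h], [0, x]]\<close>.
  The matrix \<open>[[x, s h], [0, x + t h]]\<close> is the shear conjugate of \<open>x \<oplus> (x + t h)\<close> with
  \<open>c = - s / t\<close>, so its image has corner \<open>(s / t) (f (x + t h) - f x)\<close>; comparing it with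
  \<open>[[x, s h], [0, x]]\<close> by the Lipschitz estimate at \<open>x \<oplus> x\<close> shows that
  \<open>(f (x + t h) - f x) / t\<close> differs from \<open>G (s h) / s\<close> by \<open>O (\<bar>t\<bar> / \<bar>s\<bar>)\<close>. Hence the
  difference quotients converge to \<open>G (s h) / s\<close> for every small \<open>s \<noteq> 0\<close>; this independence
  of \<open>s\<close> makes the limit complex homogeneous and additive, the Lipschitz bound makes it
  bounded, and the same estimate with \<open>t = 1\<close> bounds the Frechet remainder.\<close>

section \<open>Squared norms on \<open>l2\<close>\<close>

definition sqmod :: "'i vec \<Rightarrow> 'i \<Rightarrow> real" where "sqmod v = (\<lambda>i. (cmod (v i))^2)"
definition l2sq :: "'i vec \<Rightarrow> real" where "l2sq v = infsum (sqmod v) UNIV"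

lemma sqmod_nonneg[simp]: "0 \<le> sqmod v i" by (simp add: sqmod_def)

lemma l2norm_l2sq: "l2norm v = sqrt (l2sq v)" by (simp add: l2norm_def l2sq_def sqmod_def)

lemma l2_iff: "v \<in> l2 I \<longleftrightarrow> (\<forall>i. i \<notin> I \<longrightarrow> v i = 0) \<and> sqmod v summable_on UNIV"
  by (simp add: l2_def sqmod_def)

lemma l2sq_nonneg: "0 \<le> l2sq v" unfolding l2sq_def by (simp add: infsum_nonneg)

lemma l2norm_nonneg: "0 \<le> l2norm v" by (simp add: l2norm_l2sq l2sq_nonneg)

lemma sum_le_l2sq: assumes "sqmod v summable_on UNIV" "finite F" shows "sum (sqmod v) F \<le> l2sq v"
proof -
  have "infsum (sqmod v) F \<le> infsum (sqmod v) UNIV"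
    by (rule infsum_mono_neutral) (use assms in auto)
  thus ?thesis using assms(2) by (simp add: l2sq_def)
qed

lemma l2sq_le_if_finite_sums_le: assumes "\<And>F. finite F \<Longrightarrow> sum (sqmod v) F \<le> B"
  shows "sqmod v summable_on UNIV" "l2sq v \<le> B"
proof -
  show s: "sqmod v summable_on UNIV"
    by (rule nonneg_bdd_above_summable_on) (auto intro!: bdd_aboveI2 assms)
  show "l2sq v \<le> B" unfolding l2sq_def by (rule infsum_le_finite_sums[OF s]) (use assms in auto)
qed

lemma l2norm_mono_l2sq: assumes "l2sq w \<le> l2sq v" shows "l2norm w \<le> l2norm v"
  using assms by (simp add: l2norm_l2sq)

lemma l2norm_le_if_l2sq_le: assumes "l2sq w \<le> C^2" "0 \<le> C" shows "l2norm w \<le> C"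
  using assms by (simp add: l2norm_l2sq real_sqrt_le_iff) (metis real_sqrt_abs real_sqrt_le_mono abs_of_nonneg)

lemma l2sq_eq_l2norm_sq: "l2sq v = (l2norm v)^2" by (simp add: l2norm_l2sq l2sq_nonneg)

lemma l2sq_reindex_le:
  assumes s: "sqmod v summable_on UNIV" and inj: "inj_on g A"
    and z: "\<And>j. j \<notin> A \<Longrightarrow> w j = 0" and e: "\<And>j. j \<in> A \<Longrightarrow> w j = v (g j)"
  shows "sqmod w summable_on UNIV" "l2sq w \<le> l2sq v"
proof -
  have *: "sum (sqmod w) F \<le> l2sq v" if "finite F" for F
  proof -
    have "sum (sqmod w) F = sum (sqmod w) (F \<inter> A)"
      by (rule sum.mono_neutral_right) (use that z in \<open>auto simp: sqmod_def\<close>)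
    also have "\<dots> = sum (sqmod v \<circ> g) (F \<inter> A)" by (rule sum.cong) (auto simp: e sqmod_def)
    also have "\<dots> = sum (sqmod v) (g ` (F \<inter> A))"
      by (rule sum.reindex[symmetric]) (meson inj inf_le2 inj_on_subset)
    also have "\<dots> \<le> l2sq v" by (rule sum_le_l2sq[OF s]) (use that in auto)
    finally show ?thesis .
  qed
  show "sqmod w summable_on UNIV" "l2sq w \<le> l2sq v" using l2sq_le_if_finite_sums_le[OF *] by auto
qed

lemma l2sq_zero[simp]: "l2sq (\<lambda>_. 0) = 0" by (simp add: l2sq_def sqmod_def)
lemma l2norm_zero[simp]: "l2norm (\<lambda>_. 0) = 0" by (simp add: l2norm_l2sq)
lemma l2_zero[simp]: "(\<lambda>_. 0) \<in> l2 I" by (simp add: l2_def)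

lemma l2sq_eq_0_imp: assumes "sqmod v summable_on UNIV" "l2sq v = 0" shows "v = (\<lambda>_. 0)"
proof
  fix i have "sqmod v i = 0"
    by (rule nonneg_infsum_le_0D[of "sqmod v" UNIV]) (use assms in \<open>auto simp: l2sq_def\<close>)
  thus "v i = 0" by (simp add: sqmod_def)
qed

lemma L2_set_lincomb_le:
  assumes "finite F"
  shows "sqrt (sum (sqmod (\<lambda>i. a * u i + b * v i)) F) \<le> cmod a * sqrt (sum (sqmod u) F) + cmod b * sqrt (sum (sqmod v) F)"
proof -
  have "sqrt (sum (sqmod (\<lambda>i. a * u i + b * v i)) F) = L2_set (\<lambda>i. cmod (a * u i + b * v i)) F"
    by (simp add: L2_set_def sqmod_def)
  also have "\<dots> \<le> L2_set (\<lambda>i. cmod a * cmod (u i) + cmod b * cmod (v i)) F"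
    by (rule L2_set_mono) (auto intro: order_trans[OF norm_triangle_ineq] simp: norm_mult)
  also have "\<dots> \<le> L2_set (\<lambda>i. cmod a * cmod (u i)) F + L2_set (\<lambda>i. cmod b * cmod (v i)) F"
    by (rule L2_set_triangle_ineq)
  also have "\<dots> = cmod a * sqrt (sum (sqmod u) F) + cmod b * sqrt (sum (sqmod v) F)"
    by (simp add: L2_set_def sqmod_def power_mult_distrib sum_distrib_left[symmetric] real_sqrt_mult)
  finally show ?thesis .
qed

lemma l2norm_lincomb_le:
  assumes su: "sqmod u summable_on UNIV" and sv: "sqmod v summable_on UNIV"
  shows "sqmod (\<lambda>i. a * u i + b * v i) summable_on UNIV"
    "l2norm (\<lambda>i. a * u i + b * v i) \<le> cmod a * l2norm u + cmod b * l2norm v"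
proof -
  let ?C = "cmod a * l2norm u + cmod b * l2norm v"
  have C0: "0 \<le> ?C" by (simp add: l2norm_nonneg)
  have *: "sum (sqmod (\<lambda>i. a * u i + b * v i)) F \<le> ?C^2" if "finite F" for F
  proof -
    have "sqrt (sum (sqmod (\<lambda>i. a * u i + b * v i)) F) \<le> cmod a * sqrt (sum (sqmod u) F) + cmod b * sqrt (sum (sqmod v) F)"
      by (rule L2_set_lincomb_le[OF that])
    also have "\<dots> \<le> ?C"
      using sum_le_l2sq[OF su that] sum_le_l2sq[OF sv that] by (intro add_mono mult_left_mono) (auto simp: l2norm_l2sq)
    finally have "sqrt (sum (sqmod (\<lambda>i. a * u i + b * v i)) F) \<le> ?C" .
    moreover have nn: "0 \<le> sum (sqmod (\<lambda>i. a * u i + b * v i)) F" by (rule sum_nonneg) simp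
    ultimately have "(sqrt (sum (sqmod (\<lambda>i. a * u i + b * v i)) F))^2 \<le> ?C^2"
      by (intro power_mono) auto
    thus ?thesis using nn by simp
  qed
  show "sqmod (\<lambda>i. a * u i + b * v i) summable_on UNIV" using l2sq_le_if_finite_sums_le[OF *] by auto
  show "l2norm (\<lambda>i. a * u i + b * v i) \<le> ?C" using l2sq_le_if_finite_sums_le(2)[OF *] by (rule l2norm_le_if_l2sq_le[OF _ C0])
qed

lemma l2_lincomb: assumes "u \<in> l2 I" "v \<in> l2 I" shows "(\<lambda>i. a * u i + b * v i) \<in> l2 I"
  using assms l2norm_lincomb_le(1)[of u v a b] by (auto simp: l2_iff)

lemma l2sq_scale: "l2sq (\<lambda>i. c * v i) = (cmod c)^2 * l2sq v"
proof -
  have "sqmod (\<lambda>i. c * v i) = (\<lambda>i. (cmod c)^2 * sqmod v i)" by (auto simp: sqmod_def norm_mult power_mult_distrib)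
  thus ?thesis by (simp add: l2sq_def infsum_cmult_right')
qed

lemma l2norm_scale: "l2norm (\<lambda>i. c * v i) = cmod c * l2norm v"
  by (simp add: l2norm_l2sq l2sq_scale real_sqrt_mult)

lemma l2_scale: assumes "v \<in> l2 I" shows "(\<lambda>i. c * v i) \<in> l2 I"
  using l2_lincomb[OF assms assms, of c 0] by simp

lemma l2_add: assumes "u \<in> l2 I" "v \<in> l2 I" shows "(\<lambda>i. u i + v i) \<in> l2 I"
  using l2_lincomb[OF assms, of 1 1] by simp

lemma l2_diff: assumes "u \<in> l2 I" "v \<in> l2 I" shows "(\<lambda>i. u i - v i) \<in> l2 I"
  using l2_lincomb[OF assms, of 1 "-1"] by simp

lemma l2norm_add: assumes "u \<in> l2 I" "v \<in> l2 I" shows "l2norm (\<lambda>i. u i + v i) \<le> l2norm u + l2norm v"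
  using l2norm_lincomb_le(2)[of u v 1 1] assms by (simp add: l2_iff)

section \<open>Bounded operators\<close>

lemma bop_l2: "A \<in> bop I J \<Longrightarrow> v \<in> l2 I \<Longrightarrow> A v \<in> l2 J" by (simp add: bop_def)
lemma bop_off: "A \<in> bop I J \<Longrightarrow> v \<notin> l2 I \<Longrightarrow> A v = (\<lambda>_. 0)" by (simp add: bop_def)
lemma bop_lin: "A \<in> bop I J \<Longrightarrow> u \<in> l2 I \<Longrightarrow> v \<in> l2 I \<Longrightarrow> A (\<lambda>i. a * u i + b * v i) = (\<lambda>j. a * A u j + b * A v j)"
  by (simp add: bop_def)
lemma bop_zero: "A \<in> bop I J \<Longrightarrow> A (\<lambda>_. 0) = (\<lambda>_. 0)"
  using bop_lin[of A I J "\<lambda>_. 0" "\<lambda>_. 0" 0 0] by simp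
lemma bop_scale: "A \<in> bop I J \<Longrightarrow> v \<in> l2 I \<Longrightarrow> A (\<lambda>i. c * v i) = (\<lambda>j. c * A v j)"
  using bop_lin[of A I J v v c 0] by simp
lemma bop_diff: "A \<in> bop I J \<Longrightarrow> u \<in> l2 I \<Longrightarrow> v \<in> l2 I \<Longrightarrow> A (\<lambda>i. u i - v i) = (\<lambda>j. A u j - A v j)"
  using bop_lin[of A I J u v 1 "-1"] by simp
lemma bop_bounded: "A \<in> bop I J \<Longrightarrow> \<exists>C. \<forall>v\<in>l2 I. l2norm (A v) \<le> C * l2norm v" by (simp add: bop_def)

lemma l2_summable: "v \<in> l2 I \<Longrightarrow> sqmod v summable_on UNIV" by (simp add: l2_iff)

lemma le_abs_mult: "(x::real) \<le> C * y \<Longrightarrow> 0 \<le> y \<Longrightarrow> x \<le> \<bar>C\<bar> * y"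
  by (meson abs_ge_self mult_right_mono order_trans)

lemma le_abs_if_le_mult_le1: "(x::real) \<le> C * y \<Longrightarrow> 0 \<le> y \<Longrightarrow> y \<le> 1 \<Longrightarrow> x \<le> \<bar>C\<bar>"
  by (meson le_abs_mult abs_ge_zero mult_left_le order_trans)

lemma l2norm_eq_0_imp: assumes "v \<in> l2 I" "l2norm v = 0" shows "v = (\<lambda>_. 0)"
  using l2sq_eq_0_imp[OF l2_summable[OF assms(1)]] assms(2) by (simp add: l2norm_l2sq)

lemma opnorm_le:
  assumes "0 \<le> C" "\<And>v. v \<in> l2 I \<Longrightarrow> l2norm (A v) \<le> C * l2norm v"
  shows "opnorm I A \<le> C"
  unfolding opnorm_def
proof (rule cSup_least)
  show "(\<lambda>v. l2norm (A v)) ` {v \<in> l2 I. l2norm v \<le> 1} \<noteq> {}"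
  proof -
    have "(\<lambda>_. 0) \<in> {v \<in> l2 I. l2norm v \<le> 1}" by simp
    thus ?thesis by blast
  qed
next
  fix x assume "x \<in> (\<lambda>v. l2norm (A v)) ` {v \<in> l2 I. l2norm v \<le> 1}"
  then obtain v where v: "v \<in> l2 I" "l2norm v \<le> 1" "x = l2norm (A v)" by auto
  have "x \<le> C * l2norm v" using assms(2)[OF v(1)] v(3) by simp
  also have "\<dots> \<le> C" using v(2) assms(1) by (simp add: mult_left_le)
  finally show "x \<le> C" .
qed

lemma l2norm_le_opnorm:
  assumes A: "A \<in> bop I J" and v: "v \<in> l2 I" "l2norm v \<le> 1"
  shows "l2norm (A v) \<le> opnorm I A"
proof -
  obtain C where C: "\<forall>v\<in>l2 I. l2norm (A v) \<le> C * l2norm v" using bop_bounded[OF A] by blast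
  have bdd: "bdd_above ((\<lambda>v. l2norm (A v)) ` {v \<in> l2 I. l2norm v \<le> 1})"
  proof (rule bdd_aboveI2)
    fix u assume "u \<in> {v \<in> l2 I. l2norm v \<le> 1}"
    then have "l2norm (A u) \<le> C * l2norm u" "l2norm u \<le> 1" "0 \<le> l2norm u" using C l2norm_nonneg by auto
    then show "l2norm (A u) \<le> \<bar>C\<bar>" using le_abs_if_le_mult_le1 by blast
  qed
  show ?thesis unfolding opnorm_def by (rule cSup_upper[OF _ bdd]) (use v in auto)
qed

lemma opnorm_bound:
  assumes A: "A \<in> bop I J" and v: "v \<in> l2 I"
  shows "l2norm (A v) \<le> opnorm I A * l2norm v"
proof (cases "l2norm v = 0")
  case True
  then have "v = (\<lambda>_. 0)" by (rule l2norm_eq_0_imp[OF v])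
  then show ?thesis using bop_zero[OF A] True by simp
next
  case False
  then have pos: "0 < l2norm v" using l2norm_nonneg[of v] by linarith
  let ?c = "complex_of_real (1 / l2norm v)"
  have "l2norm (\<lambda>i. ?c * v i) = cmod ?c * l2norm v" by (rule l2norm_scale)
  then have "l2norm (\<lambda>i. ?c * v i) = 1" using pos by (simp add: norm_divide)
  then have "l2norm (A (\<lambda>i. ?c * v i)) \<le> opnorm I A" by (intro l2norm_le_opnorm[OF A] l2_scale[OF v]) simp
  moreover have "l2norm (A (\<lambda>i. ?c * v i)) = cmod ?c * l2norm (A v)"
    unfolding bop_scale[OF A v] by (rule l2norm_scale)
  ultimately have "l2norm (A v) / l2norm v \<le> opnorm I A" using pos by (simp add: norm_divide)
  then show ?thesis using pos by (simp add: divide_le_eq mult.commute)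
qed

lemma opnorm_nonneg: assumes "A \<in> bop I J" shows "0 \<le> opnorm I A"
  using l2norm_le_opnorm[OF assms l2_zero] l2norm_nonneg[of "A (\<lambda>_. 0)"] by simp

lemma bop_comp: assumes A: "A \<in> bop I J" and B: "B \<in> bop J K" shows "B \<circ> A \<in> bop I K"
proof -
  obtain C where C: "\<forall>v\<in>l2 I. l2norm (A v) \<le> C * l2norm v" using bop_bounded[OF A] by blast
  obtain D where D: "\<forall>v\<in>l2 J. l2norm (B v) \<le> D * l2norm v" using bop_bounded[OF B] by blast
  have "l2norm (B (A v)) \<le> (\<bar>D\<bar> * \<bar>C\<bar>) * l2norm v" if v: "v \<in> l2 I" for v
  proof -
    have "l2norm (B (A v)) \<le> D * l2norm (A v)" using D bop_l2[OF A v] by blast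
    also have "\<dots> \<le> \<bar>D\<bar> * l2norm (A v)" by (simp add: l2norm_nonneg mult_right_mono)
    also have "\<dots> \<le> \<bar>D\<bar> * (\<bar>C\<bar> * l2norm v)"
      by (rule mult_left_mono) (use C v l2norm_nonneg[of v] in \<open>auto intro: le_abs_mult\<close>)
    finally show ?thesis by simp
  qed
  moreover have "(B \<circ> A) v \<in> l2 K" if "v \<in> l2 I" for v
    using bop_l2[OF B bop_l2[OF A that]] by simp
  moreover have "(B \<circ> A) v = (\<lambda>_. 0)" if "v \<notin> l2 I" for v
    using bop_off[OF A that] bop_zero[OF B] by simp
  moreover have "(B \<circ> A) (\<lambda>i. a * u i + b * v i) = (\<lambda>j. a * (B \<circ> A) u j + b * (B \<circ> A) v j)"
    if "u \<in> l2 I" "v \<in> l2 I" for u v a b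
    using bop_lin[OF A that] bop_lin[OF B bop_l2[OF A that(1)] bop_l2[OF A that(2)]] by simp
  moreover have "\<exists>C. \<forall>v\<in>l2 I. l2norm ((B \<circ> A) v) \<le> C * l2norm v"
    using calculation(1) by auto
  ultimately show ?thesis unfolding bop_def mem_Collect_eq by blast
qed

lemma bop_lc:
  assumes A: "A \<in> bop I J" and B: "B \<in> bop I J"
  shows "(\<lambda>v j. a * A v j + b * B v j) \<in> bop I J"
proof -
  obtain C where C: "\<forall>v\<in>l2 I. l2norm (A v) \<le> C * l2norm v" using bop_bounded[OF A] by blast
  obtain D where D: "\<forall>v\<in>l2 I. l2norm (B v) \<le> D * l2norm v" using bop_bounded[OF B] by blast
  have "l2norm (\<lambda>j. a * A v j + b * B v j) \<le> (cmod a * \<bar>C\<bar> + cmod b * \<bar>D\<bar>) * l2norm v" if v: "v \<in> l2 I" for v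
  proof -
    have "l2norm (\<lambda>j. a * A v j + b * B v j) \<le> cmod a * l2norm (A v) + cmod b * l2norm (B v)"
      by (rule l2norm_lincomb_le(2)) (use bop_l2[OF A v] bop_l2[OF B v] in \<open>auto simp: l2_iff\<close>)
    also have "\<dots> \<le> cmod a * (\<bar>C\<bar> * l2norm v) + cmod b * (\<bar>D\<bar> * l2norm v)"
      apply (intro add_mono mult_left_mono)
      using C D v l2norm_nonneg[of v]
      by (auto intro: le_abs_mult)
    finally show ?thesis by (simp add: algebra_simps)
  qed
  moreover have "(\<lambda>j. a * A v j + b * B v j) \<in> l2 J" if "v \<in> l2 I" for v
    using l2_lincomb[OF bop_l2[OF A that] bop_l2[OF B that]] .
  moreover have "(\<lambda>j. a * A (\<lambda>i. c * u i + d * v i) j + b * B (\<lambda>i. c * u i + d * v i) j) =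
     (\<lambda>j. c * (a * A u j + b * B u j) + d * (a * A v j + b * B v j))" if "u \<in> l2 I" "v \<in> l2 I" for u v c d
    by (simp add: bop_lin[OF A that] bop_lin[OF B that] algebra_simps)
  ultimately show ?thesis using bop_off[OF A] bop_off[OF B] unfolding bop_def by auto
qed

lemma bopI:
  assumes A: "\<And>v. A v = (if v \<in> l2 I then F v else (\<lambda>_. 0))"
    and l2: "\<And>v. v \<in> l2 I \<Longrightarrow> F v \<in> l2 J"
    and bd: "\<And>v. v \<in> l2 I \<Longrightarrow> l2norm (F v) \<le> C * l2norm v"
    and lin: "\<And>u v a b. u \<in> l2 I \<Longrightarrow> v \<in> l2 I \<Longrightarrow> F (\<lambda>i. a * u i + b * v i) = (\<lambda>j. a * F u j + b * F v j)"
  shows "A \<in> bop I J"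
proof -
  have "A (\<lambda>i. a * u i + b * v i) = (\<lambda>j. a * A u j + b * A v j)" if "u \<in> l2 I" "v \<in> l2 I" for u v a b
    using that A[of u] A[of v] A[of "\<lambda>i. a * u i + b * v i"] l2_lincomb[OF that, of a b] lin[OF that] by simp
  moreover have "\<exists>C. \<forall>v\<in>l2 I. l2norm (A v) \<le> C * l2norm v" using A bd by auto
  ultimately show ?thesis unfolding bop_def mem_Collect_eq using A l2 by auto
qed

lemma inv_pair_comp: assumes "inv_pair I J s t" "inv_pair J K s' t'" shows "inv_pair I K (s' \<circ> s) (t \<circ> t')"
proof -
  have b: "s \<in> bop I J" "t \<in> bop J I" "s' \<in> bop J K" "t' \<in> bop K J" using assms by (auto simp: inv_pair_def)
  have "t (t' (s' (s v))) = v" if "v \<in> l2 I" for v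
    using assms that bop_l2[OF b(1) that] by (simp add: inv_pair_def)
  moreover have "s' (s (t (t' w))) = w" if "w \<in> l2 K" for w
    using assms that bop_l2[OF b(4) that] by (simp add: inv_pair_def)
  ultimately show ?thesis unfolding inv_pair_def using bop_comp[OF b(1) b(3)] bop_comp[OF b(4) b(2)] by simp
qed

lemma unitary_comp: assumes "unitary_pair I J s t" "unitary_pair J K s' t'" shows "unitary_pair I K (s' \<circ> s) (t \<circ> t')"
proof -
  have b: "s \<in> bop I J" using assms by (auto simp: unitary_pair_def inv_pair_def)
  have "l2norm (s' (s v)) = l2norm v" if "v \<in> l2 I" for v
    using assms that bop_l2[OF b that] by (simp add: unitary_pair_def)
  moreover have "inv_pair I K (s' \<circ> s) (t \<circ> t')" using assms inv_pair_comp unfolding unitary_pair_def by blast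
  ultimately show ?thesis unfolding unitary_pair_def by simp
qed

lemma unitary_inv: assumes "unitary_pair I J s t" shows "unitary_pair J I t s"
proof -
  have "l2norm (t w) = l2norm w" if "w \<in> l2 J" for w
    using assms that unfolding unitary_pair_def inv_pair_def by (metis bop_l2)
  then show ?thesis using assms unfolding unitary_pair_def inv_pair_def by auto
qed

lemma unitary_isometry: "unitary_pair I J s t \<Longrightarrow> v \<in> l2 I \<Longrightarrow> l2norm (s v) = l2norm v"
  by (simp add: unitary_pair_def)
lemma unitary_inv_isometry: "unitary_pair I J s t \<Longrightarrow> w \<in> l2 J \<Longrightarrow> l2norm (t w) = l2norm w"
  using unitary_inv unitary_isometry by blast

section \<open>Tuples of operators and their norm\<close>
lemma opnorm_le_tnorm: assumes "i < m" shows "opnorm J (z i) \<le> tnorm m J z"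
  unfolding tnorm_def by (rule Max_ge) (use assms in auto)

lemma tnorm_nonneg: "0 \<le> tnorm m J z"
  unfolding tnorm_def by (rule Max_ge) auto

lemma tnorm_leI: assumes "0 \<le> C" "\<And>i. i < m \<Longrightarrow> opnorm J (z i) \<le> C" shows "tnorm m J z \<le> C"
  unfolding tnorm_def using assms by (auto intro!: Max.boundedI)

lemma BT_bop: "z \<in> BT m J \<Longrightarrow> i < m \<Longrightarrow> z i \<in> bop J J" by (simp add: BT_def)
lemma BT_above: "z \<in> BT m J \<Longrightarrow> m \<le> i \<Longrightarrow> z i = (\<lambda>v. \<lambda>_. 0)" by (simp add: BT_def)

lemma tnorm_bound: assumes "z \<in> BT m J" "i < m" "v \<in> l2 J"
  shows "l2norm (z i v) \<le> tnorm m J z * l2norm v"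
  using opnorm_bound[OF BT_bop[OF assms(1,2)] assms(3)] opnorm_le_tnorm[OF assms(2), of J z]
  by (meson l2norm_nonneg mult_right_mono order_trans)

lemma tnorm_le_if_bounded: assumes "0 \<le> C" "\<And>i v. i < m \<Longrightarrow> v \<in> l2 J \<Longrightarrow> l2norm (z i v) \<le> C * l2norm v"
  shows "tnorm m J z \<le> C"
  by (rule tnorm_leI[OF assms(1)]) (rule opnorm_le[OF assms(1)], use assms(2) in auto)

lemma BT_l2: assumes "z \<in> BT m J" "v \<in> l2 J" shows "z i v \<in> l2 J"
  by (cases "i < m") (use assms in \<open>auto simp: bop_l2 BT_def\<close>)

lemma BT_lincomb: assumes "x \<in> BT m J" "y \<in> BT m J" shows "(\<lambda>i v j. a * x i v j + b * y i v j) \<in> BT m J"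
  using assms bop_lc[of "x i" J J "y i" a b for i] unfolding BT_def by auto

lemma tsub_BT: "x \<in> BT m J \<Longrightarrow> y \<in> BT m J \<Longrightarrow> tsub x y \<in> BT m J"
  using BT_lincomb[of x m J y 1 "-1"] by (simp add: tsub_def)
lemma tadd_BT: "x \<in> BT m J \<Longrightarrow> y \<in> BT m J \<Longrightarrow> tadd x y \<in> BT m J"
  using BT_lincomb[of x m J y 1 1] by (simp add: tadd_def)
lemma tscale_BT: "x \<in> BT m J \<Longrightarrow> tscale c x \<in> BT m J"
  using BT_lincomb[of x m J x c 0] by (simp add: tscale_def)

lemma tnorm_lincomb_le: assumes "x \<in> BT m J" "y \<in> BT m J"
  shows "tnorm m J (\<lambda>i v j. a * x i v j + b * y i v j) \<le> cmod a * tnorm m J x + cmod b * tnorm m J y"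
proof (rule tnorm_le_if_bounded)
  show "0 \<le> cmod a * tnorm m J x + cmod b * tnorm m J y" by (simp add: tnorm_nonneg)
  fix i v assume i: "i < m" and v: "v \<in> l2 J"
  have "l2norm (\<lambda>j. a * x i v j + b * y i v j) \<le> cmod a * l2norm (x i v) + cmod b * l2norm (y i v)"
    by (rule l2norm_lincomb_le(2)) (use BT_l2[OF assms(1) v] BT_l2[OF assms(2) v] in \<open>auto simp: l2_iff\<close>)
  also have "\<dots> \<le> cmod a * (tnorm m J x * l2norm v) + cmod b * (tnorm m J y * l2norm v)"
    by (intro add_mono mult_left_mono tnorm_bound assms i v) auto
  finally show "l2norm (\<lambda>j. a * x i v j + b * y i v j) \<le> (cmod a * tnorm m J x + cmod b * tnorm m J y) * l2norm v"
    by (simp add: algebra_simps)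
qed

lemma tnorm_tsub_le: "x \<in> BT m J \<Longrightarrow> y \<in> BT m J \<Longrightarrow> tnorm m J (tsub x y) \<le> tnorm m J x + tnorm m J y"
  using tnorm_lincomb_le[of x m J y 1 "-1"] by (simp add: tsub_def)
lemma tnorm_tadd_le: "x \<in> BT m J \<Longrightarrow> y \<in> BT m J \<Longrightarrow> tnorm m J (tadd x y) \<le> tnorm m J x + tnorm m J y"
  using tnorm_lincomb_le[of x m J y 1 1] by (simp add: tadd_def)
lemma tnorm_scale_le: "x \<in> BT m J \<Longrightarrow> tnorm m J (tscale c x) \<le> cmod c * tnorm m J x"
  using tnorm_lincomb_le[of x m J x c 0] by (simp add: tscale_def)

lemma tnorm_scale: assumes "x \<in> BT m J" shows "tnorm m J (tscale c x) = cmod c * tnorm m J x"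
proof (cases "c = 0")
  case True
  have "tnorm m J (tscale c x) \<le> 0" using tnorm_scale_le[OF assms, of c] True by simp
  then show ?thesis using True tnorm_nonneg[of m J] by (simp add: order_antisym)
next
  case False
  have "tscale (1/c) (tscale c x) = x" using False by (auto simp: tscale_def)
  then have "tnorm m J x \<le> cmod (1/c) * tnorm m J (tscale c x)"
    using tnorm_scale_le[OF tscale_BT[OF assms], of "1/c" c] by simp
  then have "cmod c * tnorm m J x \<le> tnorm m J (tscale c x)" using False
    by (simp add: norm_divide field_simps)
  then show ?thesis using tnorm_scale_le[OF assms, of c] by simp
qed

lemma tnorm_tsub_triangle: assumes "x \<in> BT m J" "y \<in> BT m J" "z \<in> BT m J"
  shows "tnorm m J (tsub x z) \<le> tnorm m J (tsub x y) + tnorm m J (tsub y z)"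
proof -
  have "tsub x z = tadd (tsub x y) (tsub y z)" by (auto simp: tsub_def tadd_def)
  then show ?thesis using tnorm_tadd_le[OF tsub_BT[OF assms(1,2)] tsub_BT[OF assms(2,3)]] by simp
qed

lemma tnorm_tsub_commute: assumes "x \<in> BT m J" "y \<in> BT m J" shows "tnorm m J (tsub x y) = tnorm m J (tsub y x)"
proof -
  have "tsub x y = tscale (-1) (tsub y x)" by (auto simp: tsub_def tscale_def)
  then show ?thesis using tnorm_scale[OF tsub_BT[OF assms(2,1)], of "-1"] by simp
qed

definition tzero :: "'a tup" where "tzero = (\<lambda>i v j. 0)"
lemma tzero_BT: "tzero \<in> BT m J"
  unfolding BT_def tzero_def using bopI[of "\<lambda>v j. 0" J "\<lambda>v j. 0" J 0] by auto

lemma tsub_self: "tsub a a = tzero" by (simp add: tsub_def tzero_def)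
lemma tsub_tzero: "tsub a tzero = a" by (simp add: tsub_def tzero_def)
lemma tscale_tzero[simp]: "tscale c tzero = tzero" by (simp add: tscale_def tzero_def)
lemma tscale_0[simp]: "tscale 0 h = tzero" by (simp add: tscale_def tzero_def)
lemma tscale_1[simp]: "tscale 1 h = h" by (simp add: tscale_def)
lemma tadd_tzero[simp]: "tadd x tzero = x" by (simp add: tadd_def tzero_def)
lemma tsub_tadd_left[simp]: "tsub (tadd x h) x = h" by (simp add: tsub_def tadd_def)

lemma BT_lincomb_apply: assumes "z \<in> BT m J" "u \<in> l2 J" "v \<in> l2 J"
  shows "z i (\<lambda>k. a * u k + b * v k) = (\<lambda>j. a * z i u j + b * z i v j)"
  by (cases "i < m") (use assms in \<open>auto simp: BT_def bop_lin\<close>)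

lemma tnorm_eq_0_imp: fixes z :: "nat tup" assumes "z \<in> BT m UNIV" "tnorm m UNIV z = 0" shows "z = tzero"
proof (rule ext, rule ext)
  fix i and v :: "nat vec"
  show "z i v = tzero i v"
  proof (cases "i < m")
    case True
    show ?thesis
    proof (cases "v \<in> l2 UNIV")
      case True
      have "l2norm (z i v) \<le> 0" using tnorm_bound[OF assms(1) \<open>i < m\<close> True] assms(2) by simp
      then have "l2norm (z i v) = 0" using l2norm_nonneg[of "z i v"] by linarith
      then show ?thesis using l2norm_eq_0_imp[OF BT_l2[OF assms(1) True]] by (simp add: tzero_def)
    next
      case False then show ?thesis using bop_off[OF BT_bop[OF assms(1) \<open>i < m\<close>]] by (simp add: tzero_def)
    qed
  next
    case False then show ?thesis using BT_above[OF assms(1)] by (simp add: tzero_def)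
  qed
qed

lemma tnorm_tsub_eq_0_imp: fixes x y :: "nat tup" assumes "x \<in> BT m UNIV" "y \<in> BT m UNIV" "tnorm m UNIV (tsub x y) = 0" shows "x = y"
proof -
  have "tsub x y = tzero" by (rule tnorm_eq_0_imp[OF tsub_BT[OF assms(1,2)] assms(3)])
  then show ?thesis by (auto simp: fun_eq_iff tsub_def tzero_def)
qed

lemma tnorm_tzero[simp]: "tnorm m J tzero = 0"
proof -
  have "tnorm m J tzero \<le> 0" by (rule tnorm_le_if_bounded) (auto simp: tzero_def)
  then show ?thesis using tnorm_nonneg[of m J tzero] by linarith
qed

section \<open>Block matrices on \<open>H \<oplus> H\<close>\<close>

lemma Jset2: "Jset 2 = {(n,k). n < 2}" unfolding Jset_def by (auto simp: numeral_eq_enat)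
lemma Jset_inf: "Jset \<infinity> = UNIV" unfolding Jset_def by auto

abbreviation "J2 \<equiv> Jset 2"

definition blk_nth :: "nat \<Rightarrow> (nat \<times> nat) vec \<Rightarrow> nat vec" where "blk_nth n w = (\<lambda>k. w (n, k))"
definition blk :: "nat vec \<Rightarrow> nat vec \<Rightarrow> (nat \<times> nat) vec" where
  "blk a b = (\<lambda>(n, k). if n = 0 then a k else if n = 1 then b k else 0)"

lemma blk_nth_blk[simp]: "blk_nth 0 (blk a b) = a" "blk_nth (Suc 0) (blk a b) = b" by (auto simp: blk_nth_def blk_def)
lemma blk_zero[simp]: "blk (\<lambda>_. 0) (\<lambda>_. 0) = (\<lambda>_. 0)" by (auto simp: blk_def)
lemma blk_nth_l2: assumes "w \<in> l2 J" shows "blk_nth n w \<in> l2 UNIV" "l2norm (blk_nth n w) \<le> l2norm w"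
proof -
  have r: "sqmod (blk_nth n w) summable_on UNIV \<and> l2sq (blk_nth n w) \<le> l2sq w"
    using l2sq_reindex_le[OF l2_summable[OF assms], of "\<lambda>k. (n,k)" UNIV "blk_nth n w"] by (auto simp: inj_on_def blk_nth_def)
  then show "blk_nth n w \<in> l2 UNIV" by (simp add: l2_iff)
  show "l2norm (blk_nth n w) \<le> l2norm w" using r by (simp add: l2norm_mono_l2sq)
qed

lemma blk_nth_lincomb: "blk_nth n (\<lambda>j. a * u j + b * v j) = (\<lambda>k. a * blk_nth n u k + b * blk_nth n v k)" by (simp add: blk_nth_def)

lemma blk0_l2: assumes "a \<in> l2 UNIV" shows "blk a (\<lambda>_. 0) \<in> l2 J2" "l2norm (blk a (\<lambda>_. 0)) \<le> l2norm a"
proof -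
  have r: "sqmod (blk a (\<lambda>_. 0)) summable_on UNIV \<and> l2sq (blk a (\<lambda>_. 0)) \<le> l2sq a"
    using l2sq_reindex_le[OF l2_summable[OF assms], of snd "{0}\<times>UNIV" "blk a (\<lambda>_. 0)"] by (auto simp: inj_on_def blk_def)
  then show "blk a (\<lambda>_. 0) \<in> l2 J2" by (auto simp: l2_iff Jset2 blk_def)
  show "l2norm (blk a (\<lambda>_. 0)) \<le> l2norm a" using r by (simp add: l2norm_mono_l2sq)
qed

lemma blk1_l2: assumes "b \<in> l2 UNIV" shows "blk (\<lambda>_. 0) b \<in> l2 J2" "l2norm (blk (\<lambda>_. 0) b) \<le> l2norm b"
proof -
  have r: "sqmod (blk (\<lambda>_. 0) b) summable_on UNIV \<and> l2sq (blk (\<lambda>_. 0) b) \<le> l2sq b"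
    using l2sq_reindex_le[OF l2_summable[OF assms], of snd "{1}\<times>UNIV" "blk (\<lambda>_. 0) b"] by (auto simp: inj_on_def blk_def)
  then show "blk (\<lambda>_. 0) b \<in> l2 J2" by (auto simp: l2_iff Jset2 blk_def)
  show "l2norm (blk (\<lambda>_. 0) b) \<le> l2norm b" using r by (simp add: l2norm_mono_l2sq)
qed

lemma blk_split: "blk a b = (\<lambda>j. blk a (\<lambda>_. 0) j + blk (\<lambda>_. 0) b j)" by (auto simp: blk_def)

lemma blk_l2: assumes "a \<in> l2 UNIV" "b \<in> l2 UNIV" shows "blk a b \<in> l2 J2" "l2norm (blk a b) \<le> l2norm a + l2norm b"
proof -
  show "blk a b \<in> l2 J2" by (subst blk_split) (rule l2_add[OF blk0_l2(1)[OF assms(1)] blk1_l2(1)[OF assms(2)]])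
  have "l2norm (blk a b) \<le> l2norm (blk a (\<lambda>_. 0)) + l2norm (blk (\<lambda>_. 0) b)"
    by (subst blk_split) (rule l2norm_add[OF blk0_l2(1)[OF assms(1)] blk1_l2(1)[OF assms(2)]])
  then show "l2norm (blk a b) \<le> l2norm a + l2norm b" using blk0_l2(2)[OF assms(1)] blk1_l2(2)[OF assms(2)] by simp
qed

lemma blk_lincomb: "blk (\<lambda>k. a * u k + b * v k) (\<lambda>k. a * u' k + b * v' k) = (\<lambda>j. a * blk u u' j + b * blk v v' j)"
  by (auto simp: blk_def)

lemma l2_J2_eq_blk: assumes "w \<in> l2 J2" shows "w = blk (blk_nth 0 w) (blk_nth (Suc 0) w)"
proof
  fix j :: "nat \<times> nat" obtain n k where j: "j = (n,k)" by (cases j)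
  show "w j = blk (blk_nth 0 w) (blk_nth (Suc 0) w) j"
    using assms unfolding j by (auto simp: blk_def blk_nth_def l2_def Jset2)
qed

definition interleave :: "nat vec \<Rightarrow> (nat \<times> nat) vec" where
  "interleave v = (if v \<in> l2 UNIV then blk (\<lambda>k. v (2*k)) (\<lambda>k. v (Suc (2*k))) else (\<lambda>_. 0))"
definition deinterleave :: "(nat \<times> nat) vec \<Rightarrow> nat vec" where
  "deinterleave w = (if w \<in> l2 J2 then (\<lambda>m. w (m mod 2, m div 2)) else (\<lambda>_. 0))"

lemma interleave_formula: assumes "v \<in> l2 UNIV"
  shows "blk (\<lambda>k. v (2*k)) (\<lambda>k. v (Suc (2*k))) \<in> l2 J2" "l2sq (blk (\<lambda>k. v (2*k)) (\<lambda>k. v (Suc (2*k)))) \<le> l2sq v"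
proof -
  have inj: "inj_on (\<lambda>(n,k). 2*k+n) {(n::nat,k::nat). n < 2}" by (auto simp: inj_on_def; presburger)
  have r: "sqmod (blk (\<lambda>k. v (2*k)) (\<lambda>k. v (Suc (2*k)))) summable_on UNIV \<and> l2sq (blk (\<lambda>k. v (2*k)) (\<lambda>k. v (Suc (2*k)))) \<le> l2sq v"
  proof -
    have z: "blk (\<lambda>k. v (2*k)) (\<lambda>k. v (Suc (2*k))) j = 0" if "j \<notin> {(n, k). n < 2}" for j
      using that by (cases j) (auto simp: blk_def)
    have e: "blk (\<lambda>k. v (2*k)) (\<lambda>k. v (Suc (2*k))) j = v ((\<lambda>(n,k). 2*k+n) j)" if "j \<in> {(n, k). n < 2}" for j
    proof -
      obtain n k where j: "j = (n,k)" by (cases j)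
      show ?thesis using that unfolding j by (cases n) (auto simp: blk_def)
    qed
    show ?thesis using l2sq_reindex_le[OF l2_summable[OF assms] inj z e] by blast
  qed
  then show "blk (\<lambda>k. v (2*k)) (\<lambda>k. v (Suc (2*k))) \<in> l2 J2" by (auto simp: l2_iff Jset2 blk_def)
  show "l2sq (blk (\<lambda>k. v (2*k)) (\<lambda>k. v (Suc (2*k)))) \<le> l2sq v" using r by simp
qed

lemma deinterleave_formula: assumes "w \<in> l2 J2"
  shows "(\<lambda>m. w (m mod 2, m div 2)) \<in> l2 UNIV" "l2sq (\<lambda>m. w (m mod 2, m div 2)) \<le> l2sq w"
proof -
  have inj: "inj_on (\<lambda>m::nat. (m mod 2, m div 2)) UNIV"
    by (auto simp: inj_on_def) (metis div_mult_mod_eq)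
  have r: "sqmod (\<lambda>m. w (m mod 2, m div 2)) summable_on UNIV \<and> l2sq (\<lambda>m. w (m mod 2, m div 2)) \<le> l2sq w"
    using l2sq_reindex_le[OF l2_summable[OF assms] inj] by auto
  then show "(\<lambda>m. w (m mod 2, m div 2)) \<in> l2 UNIV" by (simp add: l2_iff)
  show "l2sq (\<lambda>m. w (m mod 2, m div 2)) \<le> l2sq w" using r by simp
qed

lemma deinterleave_interleave[simp]: assumes "v \<in> l2 UNIV" shows "deinterleave (interleave v) = v"
proof
  fix m :: nat
  have e: "deinterleave (interleave v) m = blk (\<lambda>k. v (2*k)) (\<lambda>k. v (Suc (2*k))) (m mod 2, m div 2)"
    using assms by (simp add: interleave_def deinterleave_def interleave_formula)
  show "deinterleave (interleave v) m = v m"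
  proof (cases "even m")
    case True then show ?thesis unfolding e by (simp add: blk_def)
  next
    case False then have "m mod 2 = 1" "Suc (2 * (m div 2)) = m" by presburger+
    then show ?thesis unfolding e by (simp add: blk_def)
  qed
qed

lemma interleave_deinterleave[simp]: assumes "w \<in> l2 J2" shows "interleave (deinterleave w) = w"
proof -
  have "interleave (deinterleave w) = blk (blk_nth 0 w) (blk_nth 1 w)" using assms by (auto simp: interleave_def deinterleave_def deinterleave_formula blk_nth_def)
  then show ?thesis using l2_J2_eq_blk[OF assms] by simp
qed

lemma interleave_l2: "interleave v \<in> l2 J2" by (simp add: interleave_def interleave_formula)
lemma deinterleave_l2: "deinterleave w \<in> l2 UNIV" by (simp add: deinterleave_def deinterleave_formula)

lemma interleave_norm: assumes "v \<in> l2 UNIV" shows "l2norm (interleave v) = l2norm v"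
proof -
  have "l2sq (interleave v) \<le> l2sq v" using assms by (simp add: interleave_def interleave_formula)
  moreover have "l2sq (deinterleave (interleave v)) \<le> l2sq (interleave v)" using interleave_l2[of v] by (simp add: deinterleave_def deinterleave_formula)
  ultimately show ?thesis using assms by (simp add: l2norm_l2sq)
qed

lemma deinterleave_norm: assumes "w \<in> l2 J2" shows "l2norm (deinterleave w) = l2norm w"
  using interleave_norm[OF deinterleave_l2[of w]] assms by simp

lemma interleave_bop: "interleave \<in> bop UNIV J2"
proof (rule bopI[where F="\<lambda>v. blk (\<lambda>k. v (2*k)) (\<lambda>k. v (Suc (2*k)))" and C=1])
  fix v :: "nat vec" assume v: "v \<in> l2 UNIV"
  show "l2norm (blk (\<lambda>k. v (2*k)) (\<lambda>k. v (Suc (2*k)))) \<le> 1 * l2norm v"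
    using interleave_norm[OF v] v by (simp add: interleave_def)
next
  fix v :: "nat vec" assume v: "v \<in> l2 UNIV"
  show "blk (\<lambda>k. v (2*k)) (\<lambda>k. v (Suc (2*k))) \<in> l2 J2" by (rule interleave_formula(1)[OF v])
next
  fix u v :: "nat vec" and a b
  show "blk (\<lambda>k. a * u (2*k) + b * v (2*k)) (\<lambda>k. a * u (Suc (2*k)) + b * v (Suc (2*k))) =
    (\<lambda>j. a * blk (\<lambda>k. u (2*k)) (\<lambda>k. u (Suc (2*k))) j + b * blk (\<lambda>k. v (2*k)) (\<lambda>k. v (Suc (2*k))) j)"
    by (auto simp: blk_def)
qed (simp add: interleave_def)

lemma deinterleave_bop: "deinterleave \<in> bop J2 UNIV"
proof (rule bopI[where F="\<lambda>w. (\<lambda>m. w (m mod 2, m div 2))" and C=1])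
  fix v :: "(nat\<times>nat) vec" assume v: "v \<in> l2 J2"
  show "l2norm (\<lambda>m. v (m mod 2, m div 2)) \<le> 1 * l2norm v"
    using deinterleave_norm[OF v] v by (simp add: deinterleave_def)
qed (auto simp: deinterleave_def deinterleave_formula)

lemma unitary_interleave: "unitary_pair UNIV J2 interleave deinterleave"
  unfolding unitary_pair_def inv_pair_def using interleave_bop deinterleave_bop interleave_norm by auto

lemma enat_lt2: "enat n < 2 \<longleftrightarrow> n < 2" by (simp add: numeral_eq_enat)

lemma dsum2_apply: "dsum 2 (pair2 a b) i w = (if w \<in> l2 J2 then blk (a i (blk_nth 0 w)) (b i (blk_nth (Suc 0) w)) else (\<lambda>_. 0))"
proof (cases "w \<in> l2 J2")
  case True
  show ?thesis
  proof
    fix j :: "nat\<times>nat" obtain n k where j: "j = (n,k)" by (cases j)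
    show "dsum 2 (pair2 a b) i w j = (if w \<in> l2 J2 then blk (a i (blk_nth 0 w)) (b i (blk_nth (Suc 0) w)) else (\<lambda>_. 0)) j"
      using True unfolding j dsum_def by (auto simp: enat_lt2 blk_def pair2_def blk_nth_def)
  qed
qed (simp add: dsum_def)

(* The block matrix [[1, c], [0, 1]]. *)
definition shear :: "complex \<Rightarrow> (nat\<times>nat) vec \<Rightarrow> (nat\<times>nat) vec" where
  "shear c w = (if w \<in> l2 J2 then blk (\<lambda>k. blk_nth 0 w k + c * blk_nth (Suc 0) w k) (blk_nth (Suc 0) w) else (\<lambda>_. 0))"

lemma shear_formula: assumes "w \<in> l2 J2"
  shows "blk (\<lambda>k. blk_nth 0 w k + c * blk_nth (Suc 0) w k) (blk_nth (Suc 0) w) \<in> l2 J2"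
    "l2norm (blk (\<lambda>k. blk_nth 0 w k + c * blk_nth (Suc 0) w k) (blk_nth (Suc 0) w)) \<le> (2 + cmod c) * l2norm w"
proof -
  have p: "blk_nth 0 w \<in> l2 UNIV" "blk_nth (Suc 0) w \<in> l2 UNIV" using blk_nth_l2 assms by auto
  have q: "(\<lambda>k. blk_nth 0 w k + c * blk_nth (Suc 0) w k) \<in> l2 UNIV" using l2_lincomb[OF p, of 1 c] by simp
  show "blk (\<lambda>k. blk_nth 0 w k + c * blk_nth (Suc 0) w k) (blk_nth (Suc 0) w) \<in> l2 J2" by (rule blk_l2(1)[OF q p(2)])
  have "l2norm (\<lambda>k. blk_nth 0 w k + c * blk_nth (Suc 0) w k) \<le> cmod 1 * l2norm (blk_nth 0 w) + cmod c * l2norm (blk_nth (Suc 0) w)"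
    using l2norm_lincomb_le(2)[OF l2_summable[OF p(1)] l2_summable[OF p(2)], of 1 c] by simp
  also have "\<dots> \<le> l2norm w + cmod c * l2norm w"
    using blk_nth_l2(2)[OF assms, of 0] blk_nth_l2(2)[OF assms, of "Suc 0"] by (simp add: add_mono mult_left_mono)
  finally have "l2norm (blk (\<lambda>k. blk_nth 0 w k + c * blk_nth (Suc 0) w k) (blk_nth (Suc 0) w)) \<le> l2norm w + cmod c * l2norm w + l2norm w"
    using blk_l2(2)[OF q p(2)] blk_nth_l2(2)[OF assms, of "Suc 0"] by linarith
  then show "l2norm (blk (\<lambda>k. blk_nth 0 w k + c * blk_nth (Suc 0) w k) (blk_nth (Suc 0) w)) \<le> (2 + cmod c) * l2norm w"
    by (simp add: algebra_simps)
qed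

lemma shear_bop: "shear c \<in> bop J2 J2"
proof (rule bopI[where F="\<lambda>w. blk (\<lambda>k. blk_nth 0 w k + c * blk_nth (Suc 0) w k) (blk_nth (Suc 0) w)" and C="2 + cmod c"])
  fix u v :: "(nat\<times>nat) vec" and a b
  show "blk (\<lambda>k. blk_nth 0 (\<lambda>i. a * u i + b * v i) k + c * blk_nth (Suc 0) (\<lambda>i. a * u i + b * v i) k) (blk_nth (Suc 0) (\<lambda>i. a * u i + b * v i)) =
    (\<lambda>j. a * blk (\<lambda>k. blk_nth 0 u k + c * blk_nth (Suc 0) u k) (blk_nth (Suc 0) u) j + b * blk (\<lambda>k. blk_nth 0 v k + c * blk_nth (Suc 0) v k) (blk_nth (Suc 0) v) j)"
    by (auto simp: blk_def blk_nth_def algebra_simps)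
qed (auto simp: shear_def shear_formula)

lemma shear_l2: "shear c w \<in> l2 J2" by (simp add: shear_def shear_formula)

lemma shear_inv: assumes "w \<in> l2 J2" shows "shear (-c) (shear c w) = w"
proof -
  have "shear (-c) (shear c w) = blk (blk_nth 0 w) (blk_nth (Suc 0) w)"
    using assms shear_formula(1)[OF assms, of c] by (simp add: shear_def)
  then show ?thesis using l2_J2_eq_blk[OF assms] by simp
qed

lemma inv_pair_shear: "inv_pair J2 J2 (shear c) (shear (-c))"
  unfolding inv_pair_def using shear_bop shear_inv[of _ c] shear_inv[of _ "-c"] by auto

(* The block matrix [[a, h], [0, b]]; upper_tri_tup below transports it to H by interleave. *)
definition upper_tri :: "nat op \<Rightarrow> nat op \<Rightarrow> nat op \<Rightarrow> (nat\<times>nat) op" where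
  "upper_tri a b h w = (if w \<in> l2 J2 then blk (\<lambda>k. a (blk_nth 0 w) k + h (blk_nth (Suc 0) w) k) (b (blk_nth (Suc 0) w)) else (\<lambda>_. 0))"

lemma upper_tri_formula: assumes a: "a \<in> bop UNIV UNIV" and b: "b \<in> bop UNIV UNIV" and h: "h \<in> bop UNIV UNIV" and w: "w \<in> l2 J2"
  shows "blk (\<lambda>k. a (blk_nth 0 w) k + h (blk_nth (Suc 0) w) k) (b (blk_nth (Suc 0) w)) \<in> l2 J2"
    "l2norm (blk (\<lambda>k. a (blk_nth 0 w) k + h (blk_nth (Suc 0) w) k) (b (blk_nth (Suc 0) w))) \<le> (opnorm UNIV a + opnorm UNIV b + opnorm UNIV h) * l2norm w"
proof -
  have p: "blk_nth 0 w \<in> l2 UNIV" "blk_nth (Suc 0) w \<in> l2 UNIV" using blk_nth_l2 w by auto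
  have q: "a (blk_nth 0 w) \<in> l2 UNIV" "h (blk_nth (Suc 0) w) \<in> l2 UNIV" "b (blk_nth (Suc 0) w) \<in> l2 UNIV"
    using bop_l2 a b h p by auto
  have q2: "(\<lambda>k. a (blk_nth 0 w) k + h (blk_nth (Suc 0) w) k) \<in> l2 UNIV" by (rule l2_add[OF q(1,2)])
  show "blk (\<lambda>k. a (blk_nth 0 w) k + h (blk_nth (Suc 0) w) k) (b (blk_nth (Suc 0) w)) \<in> l2 J2" by (rule blk_l2(1)[OF q2 q(3)])
  have n: "l2norm (a (blk_nth 0 w)) \<le> opnorm UNIV a * l2norm w" "l2norm (h (blk_nth (Suc 0) w)) \<le> opnorm UNIV h * l2norm w"
     "l2norm (b (blk_nth (Suc 0) w)) \<le> opnorm UNIV b * l2norm w"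
    using opnorm_bound[OF a p(1)] opnorm_bound[OF h p(2)] opnorm_bound[OF b p(2)]
      blk_nth_l2(2)[OF w, of 0] blk_nth_l2(2)[OF w, of "Suc 0"] opnorm_nonneg[OF a] opnorm_nonneg[OF b] opnorm_nonneg[OF h]
    by (meson mult_left_mono order_trans)+
  have "l2norm (blk (\<lambda>k. a (blk_nth 0 w) k + h (blk_nth (Suc 0) w) k) (b (blk_nth (Suc 0) w))) \<le> l2norm (\<lambda>k. a (blk_nth 0 w) k + h (blk_nth (Suc 0) w) k) + l2norm (b (blk_nth (Suc 0) w))"
    by (rule blk_l2(2)[OF q2 q(3)])
  also have "\<dots> \<le> l2norm (a (blk_nth 0 w)) + l2norm (h (blk_nth (Suc 0) w)) + l2norm (b (blk_nth (Suc 0) w))"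
    using l2norm_add[OF q(1,2)] by linarith
  also have "\<dots> \<le> (opnorm UNIV a + opnorm UNIV b + opnorm UNIV h) * l2norm w" using n by (simp add: algebra_simps)
  finally show "l2norm (blk (\<lambda>k. a (blk_nth 0 w) k + h (blk_nth (Suc 0) w) k) (b (blk_nth (Suc 0) w))) \<le> (opnorm UNIV a + opnorm UNIV b + opnorm UNIV h) * l2norm w" .
qed

lemma upper_tri_bop: assumes a: "a \<in> bop UNIV UNIV" and b: "b \<in> bop UNIV UNIV" and h: "h \<in> bop UNIV UNIV"
  shows "upper_tri a b h \<in> bop J2 J2"
proof (rule bopI[where F="\<lambda>w. blk (\<lambda>k. a (blk_nth 0 w) k + h (blk_nth (Suc 0) w) k) (b (blk_nth (Suc 0) w))"
      and C="opnorm UNIV a + opnorm UNIV b + opnorm UNIV h"])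
  fix u v :: "(nat\<times>nat) vec" and c d assume u: "u \<in> l2 J2" and v: "v \<in> l2 J2"
  have p: "blk_nth 0 u \<in> l2 UNIV" "blk_nth (Suc 0) u \<in> l2 UNIV" "blk_nth 0 v \<in> l2 UNIV" "blk_nth (Suc 0) v \<in> l2 UNIV" using blk_nth_l2 u v by auto
  show "blk (\<lambda>k. a (blk_nth 0 (\<lambda>i. c * u i + d * v i)) k + h (blk_nth (Suc 0) (\<lambda>i. c * u i + d * v i)) k) (b (blk_nth (Suc 0) (\<lambda>i. c * u i + d * v i))) =
    (\<lambda>j. c * blk (\<lambda>k. a (blk_nth 0 u) k + h (blk_nth (Suc 0) u) k) (b (blk_nth (Suc 0) u)) j + d * blk (\<lambda>k. a (blk_nth 0 v) k + h (blk_nth (Suc 0) v) k) (b (blk_nth (Suc 0) v)) j)"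
    unfolding blk_nth_lincomb bop_lin[OF a p(1,3)] bop_lin[OF b p(2,4)] bop_lin[OF h p(2,4)]
    by (auto simp: blk_def algebra_simps)
qed (auto simp: upper_tri_def upper_tri_formula[OF a b h])

lemma upper_tri_zero: "upper_tri (\<lambda>v j. 0) (\<lambda>v j. 0) (\<lambda>v j. 0) w = (\<lambda>_. 0)"
  by (simp add: upper_tri_def)

lemma upper_tri_BT_l2: assumes "a \<in> BT m UNIV" "b \<in> BT m UNIV" "h \<in> BT m UNIV" "w \<in> l2 J2"
  shows "upper_tri (a i) (b i) (h i) w \<in> l2 J2"
proof (cases "i < m")
  case True then show ?thesis using assms upper_tri_formula(1)[OF BT_bop BT_bop BT_bop] by (simp add: upper_tri_def)
next
  case False
  then have "a i = (\<lambda>v _. 0)" "b i = (\<lambda>v _. 0)" "h i = (\<lambda>v _. 0)" using assms BT_above[of _ m UNIV i] by auto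
  then show ?thesis by (simp add: upper_tri_zero)
qed

definition upper_tri_tup :: "nat tup \<Rightarrow> nat tup \<Rightarrow> nat tup \<Rightarrow> nat tup" where
  "upper_tri_tup a b h = (\<lambda>i v. deinterleave (upper_tri (a i) (b i) (h i) (interleave v)))"

lemma upper_tri_tup_BT: assumes "a \<in> BT m UNIV" "b \<in> BT m UNIV" "h \<in> BT m UNIV"
  shows "upper_tri_tup a b h \<in> BT m UNIV"
proof -
  have "upper_tri_tup a b h i \<in> bop UNIV UNIV" if "i < m" for i
  proof -
    have "upper_tri_tup a b h i = deinterleave \<circ> upper_tri (a i) (b i) (h i) \<circ> interleave" by (auto simp: upper_tri_tup_def)
    moreover have "upper_tri (a i) (b i) (h i) \<in> bop J2 J2" using upper_tri_bop BT_bop assms that by blast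
    ultimately show ?thesis using bop_comp[OF bop_comp[OF interleave_bop] deinterleave_bop] by (simp add: comp_assoc)
  qed
  moreover have "upper_tri_tup a b h i = (\<lambda>v _. 0)" if "m \<le> i" for i
    using BT_above[OF assms(1) that] BT_above[OF assms(2) that] BT_above[OF assms(3) that]
    by (auto simp: upper_tri_tup_def upper_tri_zero bop_zero[OF deinterleave_bop])
  ultimately show ?thesis by (auto simp: BT_def)
qed

lemma tnorm_upper_tri_tup_le: assumes "a \<in> BT m UNIV" "b \<in> BT m UNIV" "h \<in> BT m UNIV"
  shows "tnorm m UNIV (upper_tri_tup a b h) \<le> tnorm m UNIV a + tnorm m UNIV b + tnorm m UNIV h"
proof (rule tnorm_le_if_bounded)
  show "0 \<le> tnorm m UNIV a + tnorm m UNIV b + tnorm m UNIV h" by (simp add: tnorm_nonneg)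
  fix i v assume i: "i < m" and v: "(v::nat vec) \<in> l2 UNIV"
  have bo: "a i \<in> bop UNIV UNIV" "b i \<in> bop UNIV UNIV" "h i \<in> bop UNIV UNIV" using assms i BT_bop by auto
  have "l2norm (upper_tri_tup a b h i v) = l2norm (upper_tri (a i) (b i) (h i) (interleave v))"
    unfolding upper_tri_tup_def using deinterleave_norm upper_tri_BT_l2[OF assms interleave_l2] by simp
  also have "\<dots> \<le> (opnorm UNIV (a i) + opnorm UNIV (b i) + opnorm UNIV (h i)) * l2norm (interleave v)"
    using upper_tri_formula(2)[OF bo interleave_l2] interleave_l2 by (simp add: upper_tri_def)
  also have "\<dots> \<le> (tnorm m UNIV a + tnorm m UNIV b + tnorm m UNIV h) * l2norm v"
    using interleave_norm[OF v] opnorm_le_tnorm[OF i, of UNIV a] opnorm_le_tnorm[OF i, of UNIV b] opnorm_le_tnorm[OF i, of UNIV h]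
    by (simp add: mult_right_mono l2norm_nonneg add_mono)
  finally show "l2norm (upper_tri_tup a b h i v) \<le> (tnorm m UNIV a + tnorm m UNIV b + tnorm m UNIV h) * l2norm v" .
qed

lemma tsub_upper_tri_tup: assumes "a \<in> BT m UNIV" "b \<in> BT m UNIV" "h \<in> BT m UNIV" "a' \<in> BT m UNIV" "b' \<in> BT m UNIV" "h' \<in> BT m UNIV"
  shows "tsub (upper_tri_tup a b h) (upper_tri_tup a' b' h') = upper_tri_tup (tsub a a') (tsub b b') (tsub h h')"
proof (intro ext)
  fix i v j
  have e: "upper_tri (tsub a a' i) (tsub b b' i) (tsub h h' i) (interleave v) =
      (\<lambda>j. upper_tri (a i) (b i) (h i) (interleave v) j - upper_tri (a' i) (b' i) (h' i) (interleave v) j)"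
    using interleave_l2[of v] by (auto simp: upper_tri_def tsub_def blk_def)
  show "tsub (upper_tri_tup a b h) (upper_tri_tup a' b' h') i v j = upper_tri_tup (tsub a a') (tsub b b') (tsub h h') i v j"
    unfolding upper_tri_tup_def tsub_def[of "\<lambda>i v. deinterleave (upper_tri (a i) (b i) (h i) (interleave v))"] e
    using bop_diff[OF deinterleave_bop upper_tri_BT_l2[OF assms(1-3) interleave_l2] upper_tri_BT_l2[OF assms(4-6) interleave_l2]]
    by (simp add: tsub_def)
qed

lemma tnorm_upper_tri_tup_tsub_diag_le:
  assumes "y \<in> BT m UNIV" "y' \<in> BT m UNIV" "h \<in> BT m UNIV" "p \<in> BT m UNIV"
  shows "tnorm m UNIV (tsub (upper_tri_tup y y' h) (upper_tri_tup p p tzero))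
    \<le> tnorm m UNIV (tsub y p) + tnorm m UNIV (tsub y' p) + tnorm m UNIV h"
  using tnorm_upper_tri_tup_le[OF tsub_BT[OF assms(1,4)] tsub_BT[OF assms(2,4)] tsub_BT[OF assms(3) tzero_BT]]
  by (simp add: tsub_upper_tri_tup[OF assms(1-4) assms(4) tzero_BT] tsub_tzero)

definition proj0_op :: "(nat\<times>nat) vec \<Rightarrow> nat vec" where "proj0_op w = (if w \<in> l2 J2 then blk_nth 0 w else (\<lambda>_. 0))"
definition embed1_op :: "nat vec \<Rightarrow> (nat\<times>nat) vec" where "embed1_op v = (if v \<in> l2 UNIV then blk (\<lambda>_. 0) v else (\<lambda>_. 0))"

lemma blk_nth_zero[simp]: "blk_nth n (\<lambda>_. 0) = (\<lambda>_. 0)" by (simp add: blk_nth_def)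

lemma proj0_op_bop: "proj0_op \<in> bop J2 UNIV"
  by (rule bopI[where F="blk_nth 0" and C=1]) (auto simp: proj0_op_def blk_nth_l2 blk_nth_lincomb)

lemma embed1_op_bop: "embed1_op \<in> bop UNIV J2"
proof (rule bopI[where F="blk (\<lambda>_. 0)" and C=1])
  fix u v :: "nat vec" and a b
  show "blk (\<lambda>_. 0) (\<lambda>i. a * u i + b * v i) = (\<lambda>j. a * blk (\<lambda>_. 0) u j + b * blk (\<lambda>_. 0) v j)"
    by (auto simp: blk_def)
qed (auto simp: embed1_op_def blk1_l2)

(* The (1,2) entry of a tuple on H, read as a block matrix through interleave. *)
definition corner :: "nat tup \<Rightarrow> nat tup" where "corner z = (\<lambda>i. proj0_op \<circ> interleave \<circ> z i \<circ> deinterleave \<circ> embed1_op)"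

lemma corner_BT: assumes "z \<in> BT m UNIV" shows "corner z \<in> BT m UNIV"
proof -
  have "corner z i \<in> bop UNIV UNIV" if "i < m" for i
    unfolding corner_def using bop_comp[OF bop_comp[OF bop_comp[OF bop_comp[OF embed1_op_bop deinterleave_bop] BT_bop[OF assms that]] interleave_bop] proj0_op_bop]
    by (simp add: comp_assoc)
  moreover have "corner z i = (\<lambda>v _. 0)" if "m \<le> i" for i
    using BT_above[OF assms that] by (auto simp: corner_def bop_zero[OF interleave_bop] bop_zero[OF proj0_op_bop])
  ultimately show ?thesis by (auto simp: BT_def)
qed

lemma tnorm_corner_le: assumes "z \<in> BT m UNIV" shows "tnorm m UNIV (corner z) \<le> tnorm m UNIV z"
proof (rule tnorm_le_if_bounded[OF tnorm_nonneg])
  fix i v assume i: "i < m" and v: "(v::nat vec) \<in> l2 UNIV"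
  have e: "embed1_op v \<in> l2 J2" "l2norm (embed1_op v) \<le> l2norm v" using v blk1_l2 by (auto simp: embed1_op_def)
  have t: "deinterleave (embed1_op v) \<in> l2 UNIV" "l2norm (deinterleave (embed1_op v)) = l2norm (embed1_op v)" using deinterleave_l2 deinterleave_norm[OF e(1)] by auto
  have zz: "z i (deinterleave (embed1_op v)) \<in> l2 UNIV" by (rule BT_l2[OF assms t(1)])
  have "l2norm (corner z i v) = l2norm (blk_nth 0 (interleave (z i (deinterleave (embed1_op v)))))" by (simp add: corner_def proj0_op_def interleave_l2)
  also have "\<dots> \<le> l2norm (interleave (z i (deinterleave (embed1_op v))))" by (rule blk_nth_l2(2)[OF interleave_l2])
  also have "\<dots> = l2norm (z i (deinterleave (embed1_op v)))" by (rule interleave_norm[OF zz])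
  also have "\<dots> \<le> tnorm m UNIV z * l2norm (deinterleave (embed1_op v))" by (rule tnorm_bound[OF assms i t(1)])
  also have "\<dots> \<le> tnorm m UNIV z * l2norm v" using t(2) e(2) by (simp add: mult_left_mono tnorm_nonneg)
  finally show "l2norm (corner z i v) \<le> tnorm m UNIV z * l2norm v" .
qed

lemma corner_upper_tri_tup: assumes "a \<in> BT m UNIV" "b \<in> BT m UNIV" "h \<in> BT m UNIV"
  shows "corner (upper_tri_tup a b h) = h"
proof (rule ext, rule ext)
  fix i and v :: "nat vec"
  have hz: "h i (\<lambda>_. 0) = (\<lambda>_. 0)" "a i (\<lambda>_. 0) = (\<lambda>_. 0)" "b i (\<lambda>_. 0) = (\<lambda>_. 0)" using assms
      by (cases "i < m"; auto simp: BT_def bop_zero)+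
  show "corner (upper_tri_tup a b h) i v = h i v"
  proof (cases "v \<in> l2 UNIV")
    case False
    have "h i v = (\<lambda>_. 0)" using False assms(3) by (cases "i < m") (auto simp: BT_def bop_off)
    then show ?thesis using False hz
      by (simp add: corner_def embed1_op_def upper_tri_tup_def bop_zero[OF deinterleave_bop] bop_zero[OF interleave_bop] bop_zero[OF proj0_op_bop] upper_tri_def)
  next
    case True
    have e: "embed1_op v \<in> l2 J2" using True blk1_l2 by (auto simp: embed1_op_def)
    have "upper_tri (a i) (b i) (h i) (embed1_op v) = blk (h i v) (b i v)"
      using e True hz by (simp add: upper_tri_def embed1_op_def)
    moreover have "blk (h i v) (b i v) \<in> l2 J2" by (rule blk_l2(1)[OF BT_l2[OF assms(3) True] BT_l2[OF assms(2) True]])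
    ultimately show ?thesis using e by (simp add: corner_def upper_tri_tup_def proj0_op_def)
  qed
qed

lemma corner_tsub: assumes "z \<in> BT m UNIV" "z' \<in> BT m UNIV"
  shows "corner (tsub z z') = tsub (corner z) (corner z')"
proof (rule ext, rule ext, rule ext)
  fix i and v :: "nat vec" and j
  let ?x = "deinterleave (embed1_op v)"
  have x: "?x \<in> l2 UNIV" by (rule deinterleave_l2)
  have zz: "z i ?x \<in> l2 UNIV" "z' i ?x \<in> l2 UNIV" using BT_l2[OF assms(1) x] BT_l2[OF assms(2) x] by auto
  have e: "interleave (\<lambda>j. z i ?x j - z' i ?x j) = (\<lambda>j. interleave (z i ?x) j - interleave (z' i ?x) j)"
    using bop_diff[OF interleave_bop zz] by simp
  show "corner (tsub z z') i v j = tsub (corner z) (corner z') i v j"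
    using l2_diff[OF interleave_l2 interleave_l2, of "z i ?x" "z' i ?x"] by (simp add: corner_def tsub_def proj0_op_def interleave_l2 blk_nth_def e)
qed

lemma conj_shear_dsum2: assumes a: "a \<in> BT m UNIV" and b: "b \<in> BT m UNIV"
  shows "conj (deinterleave \<circ> shear (-c)) (dsum 2 (pair2 a b)) (shear c \<circ> interleave) = upper_tri_tup a b (tscale c (tsub a b))"
proof (rule ext, rule ext)
  fix i and v :: "nat vec"
  let ?w = "interleave v"
  have w: "?w \<in> l2 J2" by (rule interleave_l2)
  have p: "blk_nth 0 ?w \<in> l2 UNIV" "blk_nth (Suc 0) ?w \<in> l2 UNIV" using blk_nth_l2 w by auto
  have s: "shear c ?w = blk (\<lambda>k. blk_nth 0 ?w k + c * blk_nth (Suc 0) ?w k) (blk_nth (Suc 0) ?w)" using w by (simp add: shear_def)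
  have lin: "a i (\<lambda>k. blk_nth 0 ?w k + c * blk_nth (Suc 0) ?w k) = (\<lambda>j. a i (blk_nth 0 ?w) j + c * a i (blk_nth (Suc 0) ?w) j)"
    using BT_lincomb_apply[OF a p, where i=i and a=1 and b=c] by simp
  have d: "dsum 2 (pair2 a b) i (shear c ?w) = blk (\<lambda>j. a i (blk_nth 0 ?w) j + c * a i (blk_nth (Suc 0) ?w) j) (b i (blk_nth (Suc 0) ?w))"
    using shear_l2[of c ?w] by (simp add: dsum2_apply s lin)
  have dl: "blk (\<lambda>j. a i (blk_nth 0 ?w) j + c * a i (blk_nth (Suc 0) ?w) j) (b i (blk_nth (Suc 0) ?w)) \<in> l2 J2"
    using blk_l2(1)[OF l2_lincomb[OF BT_l2[OF a p(1)] BT_l2[OF a p(2)], where a=1 and b=c] BT_l2[OF b p(2)]] by simp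
  have "shear (-c) (dsum 2 (pair2 a b) i (shear c ?w)) = upper_tri (a i) (b i) (tscale c (tsub a b) i) ?w"
    unfolding d using dl w by (simp add: shear_def upper_tri_def tscale_def tsub_def algebra_simps)
  then show "conj (deinterleave \<circ> shear (-c)) (dsum 2 (pair2 a b)) (shear c \<circ> interleave) i v = upper_tri_tup a b (tscale c (tsub a b)) i v"
    by (simp add: conj_def upper_tri_tup_def)
qed

lemma inv_pair_shear_interleave: "inv_pair UNIV J2 (shear c \<circ> interleave) (deinterleave \<circ> shear (-c))"
  using inv_pair_comp[OF _ inv_pair_shear] unitary_interleave unfolding unitary_pair_def by blast

lemma conj_interleave_dsum2: assumes a: "a \<in> BT m UNIV" and b: "b \<in> BT m UNIV"
  shows "conj deinterleave (dsum 2 (pair2 a b)) interleave = upper_tri_tup a b tzero"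
proof (rule ext, rule ext)
  fix i and v :: "nat vec"
  show "conj deinterleave (dsum 2 (pair2 a b)) interleave i v = upper_tri_tup a b tzero i v"
    using interleave_l2[of v] by (simp add: conj_def upper_tri_tup_def dsum2_apply upper_tri_def tzero_def)
qed

lemma dsum2_l2: assumes a: "a \<in> BT m UNIV" and b: "b \<in> BT m UNIV" and w: "w \<in> l2 J2"
  shows "dsum 2 (pair2 a b) i w \<in> l2 J2"
proof -
  have p: "blk_nth 0 w \<in> l2 UNIV" "blk_nth (Suc 0) w \<in> l2 UNIV" using blk_nth_l2 w by auto
  show ?thesis using w blk_l2(1)[OF BT_l2[OF a p(1)] BT_l2[OF b p(2)]] by (simp add: dsum2_apply)
qed


section \<open>NC domains and NC functions\<close>

text \<open>\<open>\<Omega>s\<close> is the exhaustion \<open>\<Omega>\<^sub>1, \<Omega>\<^sub>2, \<dots>\<close> of the NC domain; its levels are called \<open>\<Omega>\<^sub>k\<close> below.\<close>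

locale nc_setting =
  fixes d r :: nat and \<Omega> :: "H tup set" and f :: "H tup \<Rightarrow> H tup" and \<Omega>s :: "nat \<Rightarrow> H tup set"
  assumes dom_BT: "\<Omega> \<subseteq> BT d UNIV"
    and level_sub: "\<And>k. \<Omega>s k \<subseteq> \<Omega>" and levels_cover: "\<Omega> = (\<Union>k. \<Omega>s k)"
    and level_interior: "\<And>k x. x \<in> \<Omega>s k \<Longrightarrow> \<exists>\<epsilon>>0. \<forall>y\<in>BT d UNIV. tnorm d UNIV (tsub y x) < \<epsilon> \<longrightarrow> y \<in> \<Omega>s (Suc k)"
    and level_bounded: "\<And>k. \<exists>C. \<forall>x\<in>\<Omega>s k. tnorm d UNIV x \<le> C"
    and level_unitary_inv: "\<And>k x u t. x \<in> \<Omega>s k \<Longrightarrow> unitary_pair (UNIV :: H set) UNIV u t \<Longrightarrow> conj t x u \<in> \<Omega>s k"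
    and level_direct_sums: "\<And>k l x. 1 \<le> l \<Longrightarrow> (\<forall>n. enat n < l \<longrightarrow> x n \<in> \<Omega>s k) \<Longrightarrow>
          (\<exists>u t. unitary_pair (UNIV :: H set) (Jset l) u t \<and> conj t (dsum l x) u \<in> \<Omega>s k)"
    and f_BT: "\<And>x. x \<in> \<Omega> \<Longrightarrow> f x \<in> BT r UNIV"
    and f_nc: "\<And>x y s t. x \<in> \<Omega> \<Longrightarrow> y \<in> \<Omega> \<Longrightarrow> inv_pair (UNIV :: H set) (Jset 2) s t \<Longrightarrow>
        conj t (dsum 2 (pair2 x y)) s \<in> \<Omega> \<Longrightarrow>
        f (conj t (dsum 2 (pair2 x y)) s) = conj t (dsum 2 (pair2 (f x) (f y))) s"

lemma nc_setting_exists: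
  assumes "nc_domain d \<Omega>" "nc_function d r \<Omega> f"
  shows "\<exists>\<Omega>s. nc_setting d r \<Omega> f \<Omega>s"
proof -
  obtain \<Omega>s where "\<Omega> \<subseteq> BT d UNIV" and "(\<forall>k. \<Omega>s k \<subseteq> \<Omega>) \<and> \<Omega> = (\<Union>k. \<Omega>s k)
     \<and> (\<forall>k. \<forall>x\<in>\<Omega>s k. \<exists>\<epsilon>>0. \<forall>y\<in>BT d UNIV. tnorm d UNIV (tsub y x) < \<epsilon> \<longrightarrow> y \<in> \<Omega>s (Suc k))
     \<and> (\<forall>k. \<exists>C. \<forall>x\<in>\<Omega>s k. tnorm d UNIV x \<le> C)
     \<and> (\<forall>k. \<forall>x\<in>\<Omega>s k. \<forall>u t. unitary_pair (UNIV :: H set) UNIV u t \<longrightarrow> conj t x u \<in> \<Omega>s k)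
     \<and> (\<forall>k. \<forall>l::enat. 1 \<le> l \<longrightarrow> (\<forall>x. (\<forall>n. enat n < l \<longrightarrow> x n \<in> \<Omega>s k) \<longrightarrow>
          (\<exists>u t. unitary_pair (UNIV :: H set) (Jset l) u t \<and> conj t (dsum l x) u \<in> \<Omega>s k)))"
    using assms(1) unfolding nc_domain_def by blast
  then have "nc_setting d r \<Omega> f \<Omega>s"
    using assms(2) unfolding nc_function_def by unfold_locales blast+
  then show ?thesis by blast
qed

context nc_setting begin

abbreviation "Nd \<equiv> tnorm d UNIV"
abbreviation "Nr \<equiv> tnorm r UNIV"

lemma \<Omega>_BT: "x \<in> \<Omega> \<Longrightarrow> x \<in> BT d UNIV" using dom_BT by blast
lemma \<Omega>s_\<Omega>: "x \<in> \<Omega>s k \<Longrightarrow> x \<in> \<Omega>" using level_sub by blast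
lemma \<Omega>_ex: "x \<in> \<Omega> \<Longrightarrow> \<exists>k. x \<in> \<Omega>s k" using levels_cover by blast

lemma \<Omega>s_Suc: assumes "x \<in> \<Omega>s k" shows "x \<in> \<Omega>s (Suc k)"
proof -
  obtain \<epsilon> where "\<epsilon> > 0" "\<forall>y\<in>BT d UNIV. tnorm d UNIV (tsub y x) < \<epsilon> \<longrightarrow> y \<in> \<Omega>s (Suc k)" using level_interior[OF assms] by blast
  then show ?thesis using \<Omega>_BT[OF \<Omega>s_\<Omega>[OF assms]] by (simp add: tsub_self)
qed

lemma f_shear_upper_tri: assumes x: "x \<in> \<Omega>" and y: "y \<in> \<Omega>" and T: "upper_tri_tup x y (tscale c (tsub x y)) \<in> \<Omega>"
  shows "f (upper_tri_tup x y (tscale c (tsub x y))) = upper_tri_tup (f x) (f y) (tscale c (tsub (f x) (f y)))"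
  using f_nc[OF x y inv_pair_shear_interleave[of c]] T
    conj_shear_dsum2[OF \<Omega>_BT[OF x] \<Omega>_BT[OF y], of c] conj_shear_dsum2[OF f_BT[OF x] f_BT[OF y], of c] by simp

lemma upper_tri_diag_in_level: assumes x: "x \<in> \<Omega>s k" shows "upper_tri_tup x x tzero \<in> \<Omega>s k"
proof -
  have "\<forall>n. enat n < 2 \<longrightarrow> pair2 x x n \<in> \<Omega>s k" using x by (simp add: pair2_def)
  then obtain u t where ut: "unitary_pair (UNIV :: H set) J2 u t" and D: "conj t (dsum 2 (pair2 x x)) u \<in> \<Omega>s k"
    using level_direct_sums[where k=k and l=2 and x="pair2 x x"] by (auto simp: one_le_numeral)
  have U: "unitary_pair (UNIV :: H set) UNIV (t \<circ> interleave) (deinterleave \<circ> u)"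
    by (rule unitary_comp[OF unitary_interleave unitary_inv[OF ut]])
  have x_BT: "x \<in> BT d UNIV" by (rule \<Omega>_BT[OF \<Omega>s_\<Omega>[OF x]])
  have inv: "u (t w) = w" if "w \<in> l2 J2" for w using ut that by (simp add: unitary_pair_def inv_pair_def)
  have "conj (deinterleave \<circ> u) (conj t (dsum 2 (pair2 x x)) u) (t \<circ> interleave) = conj deinterleave (dsum 2 (pair2 x x)) interleave"
  proof (rule ext, rule ext)
    fix i and v :: "nat vec"
    show "conj (deinterleave \<circ> u) (conj t (dsum 2 (pair2 x x)) u) (t \<circ> interleave) i v = conj deinterleave (dsum 2 (pair2 x x)) interleave i v"
      using inv[OF interleave_l2[of v]] inv[OF dsum2_l2[OF x_BT x_BT interleave_l2[of v]]] by (simp add: conj_def)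
  qed
  then show ?thesis using level_unitary_inv[OF D U] conj_interleave_dsum2[OF x_BT x_BT] by simp
qed

end

section \<open>Direct sums\<close>

lemma l2sq_split_ranges:
  fixes w :: "'i vec" and g :: "'j \<Rightarrow> 'i" and h :: "'k \<Rightarrow> 'i"
  assumes s: "sqmod w summable_on UNIV" and ig: "inj g" and ih: "inj h" and dj: "range g \<inter> range h = {}"
    and z: "\<And>j. j \<notin> range g \<union> range h \<Longrightarrow> w j = 0"
  shows "l2sq w = l2sq (w \<circ> g) + l2sq (w \<circ> h)"
proof -
  have "l2sq w = infsum (sqmod w) (range g \<union> range h)"
    unfolding l2sq_def by (rule infsum_cong_neutral) (auto simp: sqmod_def z)
  also have "\<dots> = infsum (sqmod w) (range g) + infsum (sqmod w) (range h)"
    by (rule infsum_Un_disjoint[OF summable_on_subset[OF s] summable_on_subset[OF s] dj]) auto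
  also have "infsum (sqmod w) (range g) = infsum (sqmod w \<circ> g) UNIV"
    by (rule infsum_reindex) (use ig in \<open>simp add: inj_on_def inj_def\<close>)
  also have "infsum (sqmod w) (range h) = infsum (sqmod w \<circ> h) UNIV"
    by (rule infsum_reindex) (use ih in \<open>simp add: inj_on_def inj_def\<close>)
  finally show ?thesis by (simp add: l2sq_def sqmod_def comp_def)
qed

lemma l2sq_blk: assumes "a \<in> l2 UNIV" "b \<in> l2 UNIV" shows "l2sq (blk a b) = l2sq a + l2sq b"
proof -
  have "l2sq (blk a b) = l2sq (blk a b \<circ> (\<lambda>k. (0,k))) + l2sq (blk a b \<circ> (\<lambda>k. (1,k)))"
    by (rule l2sq_split_ranges[OF l2_summable[OF blk_l2(1)[OF assms]]]) (auto simp: inj_def blk_def image_iff)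
  then show ?thesis by (simp add: comp_def blk_def)
qed

definition tail_blks :: "(nat\<times>nat) vec \<Rightarrow> (nat\<times>nat) vec" where "tail_blks w = (\<lambda>(n,k). w (Suc n, k))"
definition cons_blk :: "nat vec \<Rightarrow> (nat\<times>nat) vec \<Rightarrow> (nat\<times>nat) vec" where
  "cons_blk a b = (\<lambda>(n,k). if n = 0 then a k else b (n - 1, k))"

lemma tail_blks_l2: assumes "w \<in> l2 UNIV" shows "tail_blks w \<in> l2 UNIV"
proof -
  have "sqmod (tail_blks w) summable_on UNIV"
    by (rule l2sq_reindex_le(1)[OF l2_summable[OF assms], of "\<lambda>(n,k). (Suc n, k)" UNIV]) (auto simp: inj_on_def tail_blks_def)
  then show ?thesis by (simp add: l2_iff)
qed

lemma l2sq_head_tail: assumes "w \<in> l2 UNIV" shows "l2sq w = l2sq (blk_nth 0 w) + l2sq (tail_blks w)"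
proof -
  have "l2sq w = l2sq (w \<circ> (\<lambda>k. (0,k))) + l2sq (w \<circ> (\<lambda>(n,k). (Suc n, k)))"
  proof (rule l2sq_split_ranges[OF l2_summable[OF assms]])
    show "inj (\<lambda>(n::nat, k::nat). (Suc n, k))" by (auto simp: inj_def)
    show "range (\<lambda>k. (0::nat, k::nat)) \<inter> range (\<lambda>(n, k). (Suc n, k)) = {}" by auto
    fix j :: "nat \<times> nat" assume "j \<notin> range (\<lambda>k. (0, k)) \<union> range (\<lambda>(n, k). (Suc n, k))"
    then show "w j = 0" by (cases j) (metis (no_types, lifting) UNIV_I UnI1 UnI2 case_prod_conv image_eqI not0_implies_Suc)
  qed (auto simp: inj_def)
  moreover have "w \<circ> (\<lambda>k. (0,k)) = blk_nth 0 w" "w \<circ> (\<lambda>(n,k). (Suc n, k)) = tail_blks w"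
    by (auto simp: blk_nth_def tail_blks_def)
  ultimately show ?thesis by simp
qed

lemma cons_blk_l2: assumes a: "a \<in> l2 UNIV" and b: "b \<in> l2 UNIV" shows "cons_blk a b \<in> l2 UNIV"
proof -
  have p: "sqmod (\<lambda>(n,k). if n = 0 then a k else 0) summable_on UNIV"
    by (rule l2sq_reindex_le(1)[OF l2_summable[OF a], of snd "{0}\<times>UNIV"]) (auto simp: inj_on_def split: if_splits)
  have q: "sqmod (\<lambda>(n,k). if n = 0 then 0 else b (n - 1, k)) summable_on UNIV"
  proof (rule l2sq_reindex_le(1)[OF l2_summable[OF b], of "\<lambda>(n::nat,k::nat). (n - 1, k)" "{j. fst j \<noteq> 0}"])
    have h: "(x::nat) \<noteq> 0 \<Longrightarrow> y \<noteq> 0 \<Longrightarrow> x - 1 = y - 1 \<Longrightarrow> x = y" for x y by arith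
    show "inj_on (\<lambda>(n::nat, k::nat). (n - 1, k)) {j. fst j \<noteq> 0}" using h by (auto simp: inj_on_def)
  qed auto
  have "cons_blk a b = (\<lambda>j. (\<lambda>(n,k). if n = 0 then a k else 0) j + (\<lambda>(n,k). if n = 0 then 0 else b (n - 1, k)) j)"
    by (auto simp: cons_blk_def)
  then show ?thesis using l2_add[of "\<lambda>(n,k). if n = 0 then a k else 0" UNIV "\<lambda>(n,k). if n = 0 then 0 else b (n - 1, k)"] p q
    by (simp add: l2_iff)
qed

lemma blk_nth_cons_blk[simp]: "blk_nth 0 (cons_blk a b) = a" by (simp add: blk_nth_def cons_blk_def)
lemma tail_blks_cons_blk[simp]: "tail_blks (cons_blk a b) = b" by (simp add: tail_blks_def cons_blk_def)
lemma cons_blk_head_tail: "cons_blk (blk_nth 0 w) (tail_blks w) = w"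
  by (auto simp: cons_blk_def tail_blks_def blk_nth_def fun_eq_iff)

lemma l2sq_cons_blk: assumes a: "a \<in> l2 UNIV" and b: "b \<in> l2 UNIV" shows "l2sq (cons_blk a b) = l2sq a + l2sq b"
  using l2sq_head_tail[OF cons_blk_l2[OF a b]] by simp

lemma sum_l2sq_blk_nth_le: assumes s: "sqmod w summable_on UNIV" and G: "finite G"
  shows "(\<Sum>n\<in>G. l2sq (blk_nth n w)) \<le> l2sq w"
proof -
  have sG: "sqmod w summable_on (G \<times> UNIV)" by (rule summable_on_subset[OF s]) auto
  have "(\<Sum>n\<in>G. l2sq (blk_nth n w)) = (\<Sum>\<^sub>\<infinity>n\<in>G. \<Sum>\<^sub>\<infinity>k\<in>UNIV. sqmod w (n, k))"
    using G by (simp add: l2sq_def blk_nth_def sqmod_def)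
  also have "\<dots> = infsum (sqmod w) (G \<times> UNIV)" by (rule infsum_Sigma_banach[OF sG])
  also have "\<dots> \<le> infsum (sqmod w) UNIV" by (rule infsum_mono_neutral[OF sG s]) auto
  finally show ?thesis by (simp add: l2sq_def)
qed

lemma dsum_inf_apply: assumes "w \<in> l2 UNIV"
  shows "dsum \<infinity> x i w = (\<lambda>(n,k). x n i (blk_nth n w) k)"
  using assms by (auto simp: dsum_def Jset_inf blk_nth_def fun_eq_iff)

lemma dsum_inf_l2:
  fixes x :: "nat \<Rightarrow> nat tup"
  assumes xb: "\<And>n. x n \<in> BT m UNIV" and C: "\<And>n. tnorm m UNIV (x n) \<le> C" and w: "w \<in> l2 UNIV"
  shows "dsum \<infinity> x i w \<in> l2 UNIV"
proof (cases "i < m")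
  case False
  then have "dsum \<infinity> x i w = (\<lambda>_. 0)" using BT_above[OF xb] w by (simp add: dsum_inf_apply fun_eq_iff)
  then show ?thesis by simp
next
  case True
  let ?q = "(\<lambda>(n,k). x n i (blk_nth n w) k)"
  have C0: "0 \<le> C" using C[of 0] tnorm_nonneg[of m UNIV "x 0"] by linarith
  have pl: "blk_nth n w \<in> l2 UNIV" for n using blk_nth_l2 w by blast
  have bn: "l2sq (x n i (blk_nth n w)) \<le> C^2 * l2sq (blk_nth n w)" for n
  proof -
    have "l2norm (x n i (blk_nth n w)) \<le> C * l2norm (blk_nth n w)"
      using tnorm_bound[OF xb True pl] C[of n] l2norm_nonneg[of "blk_nth n w"] by (meson mult_right_mono order_trans)
    then have "(l2norm (x n i (blk_nth n w)))^2 \<le> (C * l2norm (blk_nth n w))^2" by (rule power_mono) (simp add: l2norm_nonneg)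
    then show ?thesis by (simp add: l2sq_eq_l2norm_sq power_mult_distrib)
  qed
  have "sum (sqmod ?q) F \<le> C^2 * l2sq w" if F: "finite F" for F
  proof -
    let ?G = "fst ` F" and ?K = "snd ` F"
    have "sum (sqmod ?q) F \<le> sum (sqmod ?q) (?G \<times> ?K)"
      by (rule sum_mono2) (use F in \<open>auto simp: sqmod_def intro: rev_image_eqI\<close>)
    also have "\<dots> = (\<Sum>n\<in>?G. \<Sum>k\<in>?K. sqmod (x n i (blk_nth n w)) k)"
      by (simp add: sum.cartesian_product sqmod_def split_def)
    also have "\<dots> \<le> (\<Sum>n\<in>?G. l2sq (x n i (blk_nth n w)))"
      by (rule sum_mono) (rule sum_le_l2sq[OF l2_summable[OF BT_l2[OF xb pl]]], use F in auto)
    also have "\<dots> \<le> (\<Sum>n\<in>?G. C^2 * l2sq (blk_nth n w))" by (rule sum_mono[OF bn])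
    also have "\<dots> = C^2 * (\<Sum>n\<in>?G. l2sq (blk_nth n w))" by (simp add: sum_distrib_left)
    also have "\<dots> \<le> C^2 * l2sq w" by (rule mult_left_mono[OF sum_l2sq_blk_nth_le[OF l2_summable[OF w]]]) (use F in auto)
    finally show ?thesis .
  qed
  then have "sqmod ?q summable_on UNIV" using l2sq_le_if_finite_sums_le by blast
  then show ?thesis using w by (simp add: dsum_inf_apply l2_iff)
qed

lemma l2norm_dsum2_le_conj:
  assumes a: "a \<in> BT m UNIV" and b: "b \<in> BT m UNIV" and U: "unitary_pair UNIV J2 s ts"
    and Z: "conj ts (dsum 2 (pair2 a b)) s \<in> BT m UNIV" and i: "i < m" and w: "w \<in> l2 J2"
  shows "l2norm (dsum 2 (pair2 a b) i w) \<le> tnorm m UNIV (conj ts (dsum 2 (pair2 a b)) s) * l2norm w"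
proof -
  let ?Z = "conj ts (dsum 2 (pair2 a b)) s"
  have ts: "ts \<in> bop J2 UNIV" using U by (simp add: unitary_pair_def inv_pair_def)
  have tw: "ts w \<in> l2 UNIV" by (rule bop_l2[OF ts w])
  have "dsum 2 (pair2 a b) i w = s (?Z i (ts w))"
    using U w dsum2_l2[OF a b w, of i] by (simp add: conj_def unitary_pair_def inv_pair_def)
  then have "l2norm (dsum 2 (pair2 a b) i w) = l2norm (?Z i (ts w))"
    using unitary_isometry[OF U BT_l2[OF Z tw]] by simp
  also have "\<dots> \<le> tnorm m UNIV ?Z * l2norm (ts w)" by (rule tnorm_bound[OF Z i tw])
  also have "l2norm (ts w) = l2norm w" by (rule unitary_inv_isometry[OF U w])
  finally show ?thesis .
qed

lemma tnorm_summand_le_conj_dsum2: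
  assumes a: "a \<in> BT m UNIV" and b: "b \<in> BT m UNIV" and U: "unitary_pair UNIV J2 s ts"
    and Z: "conj ts (dsum 2 (pair2 a b)) s \<in> BT m UNIV"
  shows "tnorm m UNIV a \<le> tnorm m UNIV (conj ts (dsum 2 (pair2 a b)) s)"
    "tnorm m UNIV b \<le> tnorm m UNIV (conj ts (dsum 2 (pair2 a b)) s)"
proof -
  note key = l2norm_dsum2_le_conj[OF a b U Z]
  have z0: "a i (\<lambda>_. 0) = (\<lambda>_. 0)" "b i (\<lambda>_. 0) = (\<lambda>_. 0)" for i
    using a b by (cases "i < m"; auto simp: BT_def bop_zero)+
  show "tnorm m UNIV a \<le> tnorm m UNIV (conj ts (dsum 2 (pair2 a b)) s)"
  proof (rule tnorm_le_if_bounded[OF tnorm_nonneg])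
    fix i v assume i: "i < m" and v: "(v::nat vec) \<in> l2 UNIV"
    have w: "blk v (\<lambda>_. 0) \<in> l2 J2" by (rule blk0_l2(1)[OF v])
    have "dsum 2 (pair2 a b) i (blk v (\<lambda>_. 0)) = blk (a i v) (\<lambda>_. 0)" using w z0 by (simp add: dsum2_apply)
    moreover have "l2norm (blk (a i v) (\<lambda>_. 0)) = l2norm (a i v)" "l2norm (blk v (\<lambda>_. 0)) = l2norm v"
      using l2sq_blk[OF BT_l2[OF a v] l2_zero] l2sq_blk[OF v l2_zero] by (simp_all add: l2norm_l2sq)
    ultimately show "l2norm (a i v) \<le> tnorm m UNIV (conj ts (dsum 2 (pair2 a b)) s) * l2norm v"
      using key[OF i w] by simp
  qed
  show "tnorm m UNIV b \<le> tnorm m UNIV (conj ts (dsum 2 (pair2 a b)) s)"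
  proof (rule tnorm_le_if_bounded[OF tnorm_nonneg])
    fix i v assume i: "i < m" and v: "(v::nat vec) \<in> l2 UNIV"
    have w: "blk (\<lambda>_. 0) v \<in> l2 J2" by (rule blk1_l2(1)[OF v])
    have "dsum 2 (pair2 a b) i (blk (\<lambda>_. 0) v) = blk (\<lambda>_. 0) (b i v)" using w z0 by (simp add: dsum2_apply)
    moreover have "l2norm (blk (\<lambda>_. 0) (b i v)) = l2norm (b i v)" "l2norm (blk (\<lambda>_. 0) v) = l2norm v"
      using l2sq_blk[OF l2_zero BT_l2[OF b v]] l2sq_blk[OF l2_zero v] by (simp_all add: l2norm_l2sq)
    ultimately show "l2norm (b i v) \<le> tnorm m UNIV (conj ts (dsum 2 (pair2 a b)) s) * l2norm v"
      using key[OF i w] by simp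
  qed
qed

(* H^(\<infinity>) = H \<oplus> H^(\<infinity>) \<cong> H \<oplus> H: the first summand is split off and the rest is identified
   with H by a unitary (up, tp). *)
definition split_head :: "((nat\<times>nat) vec \<Rightarrow> nat vec) \<Rightarrow> (nat\<times>nat) vec \<Rightarrow> (nat\<times>nat) vec" where
  "split_head tp w = (if w \<in> l2 UNIV then blk (blk_nth 0 w) (tp (tail_blks w)) else (\<lambda>_. 0))"
definition join_head :: "(nat vec \<Rightarrow> (nat\<times>nat) vec) \<Rightarrow> (nat\<times>nat) vec \<Rightarrow> (nat\<times>nat) vec" where
  "join_head up q = (if q \<in> l2 J2 then cons_blk (blk_nth 0 q) (up (blk_nth (Suc 0) q)) else (\<lambda>_. 0))"

lemma tail_blks_lincomb: "tail_blks (\<lambda>i. a * u i + b * v i) = (\<lambda>j. a * tail_blks u j + b * tail_blks v j)"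
  by (auto simp: tail_blks_def)
lemma cons_blk_lincomb:
  "cons_blk (\<lambda>i. a * u i + b * v i) (\<lambda>i. a * u' i + b * v' i) = (\<lambda>j. a * cons_blk u u' j + b * cons_blk v v' j)"
  by (auto simp: cons_blk_def)

lemma l2sq_eq_if_l2norm_eq: "l2norm a = l2norm b \<Longrightarrow> l2sq a = l2sq b" by (simp add: l2sq_eq_l2norm_sq)

lemma split_head_isometry:
  assumes U: "unitary_pair (UNIV::nat set) (UNIV::(nat\<times>nat) set) up tp"
  shows "split_head tp \<in> bop UNIV J2" and "\<And>w. w \<in> l2 UNIV \<Longrightarrow> l2norm (split_head tp w) = l2norm w"
proof -
  have tp: "tp \<in> bop UNIV UNIV" using U by (auto simp: unitary_pair_def inv_pair_def)
  have l2: "blk (blk_nth 0 w) (tp (tail_blks w)) \<in> l2 J2" if "w \<in> l2 UNIV" for w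
    by (rule blk_l2(1)[OF blk_nth_l2(1)[OF that] bop_l2[OF tp tail_blks_l2[OF that]]])
  have norm: "l2norm (blk (blk_nth 0 w) (tp (tail_blks w))) = l2norm w" if w: "w \<in> l2 UNIV" for w
  proof -
    have "l2sq (blk (blk_nth 0 w) (tp (tail_blks w))) = l2sq (blk_nth 0 w) + l2sq (tp (tail_blks w))"
      by (rule l2sq_blk[OF blk_nth_l2(1)[OF w] bop_l2[OF tp tail_blks_l2[OF w]]])
    also have "l2sq (tp (tail_blks w)) = l2sq (tail_blks w)"
      by (rule l2sq_eq_if_l2norm_eq[OF unitary_inv_isometry[OF U tail_blks_l2[OF w]]])
    finally show ?thesis using l2sq_head_tail[OF w] by (simp add: l2norm_l2sq)
  qed
  show "split_head tp \<in> bop UNIV J2"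
  proof (rule bopI[where F="\<lambda>w. blk (blk_nth 0 w) (tp (tail_blks w))" and C=1])
    fix u v :: "(nat\<times>nat) vec" and a b assume u: "u \<in> l2 UNIV" and v: "v \<in> l2 UNIV"
    show "blk (blk_nth 0 (\<lambda>i. a * u i + b * v i)) (tp (tail_blks (\<lambda>i. a * u i + b * v i))) =
      (\<lambda>j. a * blk (blk_nth 0 u) (tp (tail_blks u)) j + b * blk (blk_nth 0 v) (tp (tail_blks v)) j)"
      unfolding tail_blks_lincomb bop_lin[OF tp tail_blks_l2[OF u] tail_blks_l2[OF v]] blk_nth_lincomb blk_lincomb ..
  qed (auto simp: split_head_def l2 norm)
  show "\<And>w. w \<in> l2 UNIV \<Longrightarrow> l2norm (split_head tp w) = l2norm w" using norm by (simp add: split_head_def)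
qed

lemma join_head_bop:
  assumes U: "unitary_pair (UNIV::nat set) (UNIV::(nat\<times>nat) set) up tp"
  shows "join_head up \<in> bop J2 UNIV"
proof -
  have up: "up \<in> bop UNIV UNIV" using U by (auto simp: unitary_pair_def inv_pair_def)
  have l2: "cons_blk (blk_nth 0 q) (up (blk_nth (Suc 0) q)) \<in> l2 UNIV" if "q \<in> l2 J2" for q
    by (rule cons_blk_l2[OF blk_nth_l2(1)[OF that] bop_l2[OF up blk_nth_l2(1)[OF that]]])
  have norm: "l2norm (cons_blk (blk_nth 0 q) (up (blk_nth (Suc 0) q))) = l2norm q" if q: "q \<in> l2 J2" for q
  proof -
    have p: "blk_nth 0 q \<in> l2 UNIV" "blk_nth (Suc 0) q \<in> l2 UNIV" using blk_nth_l2 q by auto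
    have "l2sq (cons_blk (blk_nth 0 q) (up (blk_nth (Suc 0) q))) = l2sq (blk_nth 0 q) + l2sq (up (blk_nth (Suc 0) q))"
      by (rule l2sq_cons_blk[OF p(1) bop_l2[OF up p(2)]])
    also have "l2sq (up (blk_nth (Suc 0) q)) = l2sq (blk_nth (Suc 0) q)"
      by (rule l2sq_eq_if_l2norm_eq[OF unitary_isometry[OF U p(2)]])
    also have "l2sq (blk_nth 0 q) + l2sq (blk_nth (Suc 0) q) = l2sq q" using l2sq_blk[OF p] l2_J2_eq_blk[OF q] by simp
    finally show ?thesis by (simp add: l2norm_l2sq)
  qed
  show ?thesis
  proof (rule bopI[where F="\<lambda>q. cons_blk (blk_nth 0 q) (up (blk_nth (Suc 0) q))" and C=1])
    fix u v :: "(nat\<times>nat) vec" and a b assume u: "u \<in> l2 J2" and v: "v \<in> l2 J2"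
    show "cons_blk (blk_nth 0 (\<lambda>i. a * u i + b * v i)) (up (blk_nth (Suc 0) (\<lambda>i. a * u i + b * v i))) =
      (\<lambda>j. a * cons_blk (blk_nth 0 u) (up (blk_nth (Suc 0) u)) j + b * cons_blk (blk_nth 0 v) (up (blk_nth (Suc 0) v)) j)"
      unfolding blk_nth_lincomb bop_lin[OF up blk_nth_l2(1)[OF u] blk_nth_l2(1)[OF v]] cons_blk_lincomb ..
  qed (auto simp: join_head_def l2 norm)
qed

lemma unitary_split_head:
  assumes U: "unitary_pair (UNIV::nat set) (UNIV::(nat\<times>nat) set) up tp"
  shows "unitary_pair UNIV J2 (split_head tp) (join_head up)"
proof -
  have tu: "\<And>v. v \<in> l2 UNIV \<Longrightarrow> tp (up v) = v" "\<And>w. w \<in> l2 UNIV \<Longrightarrow> up (tp w) = w"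
    using U by (auto simp: unitary_pair_def inv_pair_def)
  have tp: "tp \<in> bop UNIV UNIV" using U by (auto simp: unitary_pair_def inv_pair_def)
  have "join_head up (split_head tp w) = w" if w: "w \<in> l2 UNIV" for w
    using w tu(2)[OF tail_blks_l2[OF w]] blk_l2(1)[OF blk_nth_l2(1)[OF w] bop_l2[OF tp tail_blks_l2[OF w]]]
    by (simp add: split_head_def join_head_def cons_blk_head_tail)
  moreover have "split_head tp (join_head up q) = q" if q: "q \<in> l2 J2" for q
    using q tu(1)[OF blk_nth_l2(1)[OF q]] l2_J2_eq_blk[OF q] bop_l2[OF join_head_bop[OF U] q]
    by (simp add: split_head_def join_head_def)
  ultimately show ?thesis
    using split_head_isometry[OF U] join_head_bop[OF U] by (simp add: unitary_pair_def inv_pair_def)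
qed

lemma join_head_dsum2_split_head:
  fixes x :: "nat \<Rightarrow> nat tup"
  assumes xb: "\<And>n. x n \<in> BT m UNIV" and C: "\<And>n. tnorm m UNIV (x n) \<le> C"
    and U: "unitary_pair (UNIV::nat set) (UNIV::(nat\<times>nat) set) up tp" and w: "w \<in> l2 UNIV"
  shows "join_head up (dsum 2 (pair2 (x 0) (conj tp (dsum \<infinity> (\<lambda>n. x (Suc n))) up)) i (split_head tp w))
    = dsum \<infinity> x i w"
proof -
  let ?x' = "\<lambda>n. x (Suc n)"
  have tp: "tp \<in> bop UNIV UNIV" using U by (auto simp: unitary_pair_def inv_pair_def)
  have sw: "tail_blks w \<in> l2 UNIV" by (rule tail_blks_l2[OF w])
  have Dl: "dsum \<infinity> ?x' i (tail_blks w) \<in> l2 UNIV" by (rule dsum_inf_l2[OF xb C sw])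
  have up_tp: "up (tp v) = v" if "v \<in> l2 UNIV" for v using U that by (simp add: unitary_pair_def inv_pair_def)
  have "dsum 2 (pair2 (x 0) (conj tp (dsum \<infinity> ?x') up)) i (split_head tp w)
      = blk (x 0 i (blk_nth 0 w)) (tp (dsum \<infinity> ?x' i (tail_blks w)))"
    using w up_tp[OF sw] bop_l2[OF split_head_isometry(1)[OF U] w] by (simp add: dsum2_apply split_head_def conj_def)
  moreover have "blk (x 0 i (blk_nth 0 w)) (tp (dsum \<infinity> ?x' i (tail_blks w))) \<in> l2 J2"
    by (rule blk_l2(1)[OF BT_l2[OF xb blk_nth_l2(1)[OF w]] bop_l2[OF tp Dl]])
  ultimately have "join_head up (dsum 2 (pair2 (x 0) (conj tp (dsum \<infinity> ?x') up)) i (split_head tp w))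
      = cons_blk (x 0 i (blk_nth 0 w)) (dsum \<infinity> ?x' i (tail_blks w))"
    using up_tp[OF Dl] by (simp add: join_head_def)
  also have "\<dots> = dsum \<infinity> x i w"
  proof (rule ext)
    fix j :: "nat\<times>nat" obtain n k where j: "j = (n, k)" by (cases j)
    have "blk_nth (n - 1) (tail_blks w) = blk_nth n w" if "n \<noteq> 0" using that by (auto simp: blk_nth_def tail_blks_def)
    then show "cons_blk (x 0 i (blk_nth 0 w)) (dsum \<infinity> ?x' i (tail_blks w)) j = dsum \<infinity> x i w j"
      unfolding j using w sw by (auto simp: cons_blk_def dsum_inf_apply)
  qed
  finally show ?thesis .
qed

lemma conj_dsum_inf_cons:
  fixes x :: "nat \<Rightarrow> nat tup"
  assumes xb: "\<And>n. x n \<in> BT m UNIV" and C: "\<And>n. tnorm m UNIV (x n) \<le> C"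
    and U: "unitary_pair (UNIV::nat set) (UNIV::(nat\<times>nat) set) u t"
    and U': "unitary_pair (UNIV::nat set) (UNIV::(nat\<times>nat) set) up tp"
  shows "conj t (dsum \<infinity> x) u
    = conj (t \<circ> join_head up) (dsum 2 (pair2 (x 0) (conj tp (dsum \<infinity> (\<lambda>n. x (Suc n))) up))) (split_head tp \<circ> u)"
proof (rule ext, rule ext)
  fix i and v :: "nat vec"
  have u: "u \<in> bop UNIV UNIV" using U by (simp add: unitary_pair_def inv_pair_def)
  have "u v \<in> l2 UNIV" using bop_l2[OF u, of v] bop_off[OF u, of v] by (cases "v \<in> l2 UNIV") auto
  then show "conj t (dsum \<infinity> x) u i v
    = conj (t \<circ> join_head up) (dsum 2 (pair2 (x 0) (conj tp (dsum \<infinity> (\<lambda>n. x (Suc n))) up))) (split_head tp \<circ> u) i v"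
    using join_head_dsum2_split_head[where x=x, OF xb C U'] by (simp add: conj_def)
qed

section \<open>Local boundedness\<close>

context nc_setting begin

lemma f_bounded_on_level: "\<exists>M. \<forall>x\<in>\<Omega>s k. Nr (f x) \<le> M"
proof (rule ccontr)
  assume "\<not> (\<exists>M. \<forall>x\<in>\<Omega>s k. Nr (f x) \<le> M)"
  then have "\<forall>n::nat. \<exists>x. x \<in> \<Omega>s k \<and> real n < Nr (f x)" by (meson not_le)
  then obtain z where z: "\<And>n. z n \<in> \<Omega>s k" "\<And>n. real n < Nr (f (z n))" by metis
  define tl where "tl m = (\<lambda>n. z (n + m))" for m
  have "\<exists>u t. unitary_pair (UNIV :: H set) (Jset \<infinity>) u t \<and> conj t (dsum \<infinity> (tl m)) u \<in> \<Omega>s k" for m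
    by (rule level_direct_sums) (auto simp: tl_def z)
  then obtain U T where UT: "\<And>m. unitary_pair (UNIV :: H set) UNIV (U m) (T m)"
      "\<And>m. conj (T m) (dsum \<infinity> (tl m)) (U m) \<in> \<Omega>s k" unfolding Jset_inf by metis
  define Y where "Y m = conj (T m) (dsum \<infinity> (tl m)) (U m)" for m
  have YO: "Y m \<in> \<Omega>" for m unfolding Y_def by (rule \<Omega>s_\<Omega>[OF UT(2)])
  have zO: "z m \<in> \<Omega>" for m using z(1) \<Omega>s_\<Omega> by blast
  obtain C where C: "\<forall>x\<in>\<Omega>s k. Nd x \<le> C" using level_bounded by blast
  have tlb: "tl m n \<in> BT d UNIV" "Nd (tl m n) \<le> C" for m n
    using z(1)[of "n+m"] C \<Omega>_BT[OF \<Omega>s_\<Omega>[OF z(1)[of "n+m"]]] by (auto simp: tl_def)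
  have key: "Nr (f (z m)) \<le> Nr (f (Y m)) \<and> Nr (f (Y (Suc m))) \<le> Nr (f (Y m))" for m
  proof -
    let ?s = "split_head (T (Suc m)) \<circ> U m" and ?ts = "T m \<circ> join_head (U (Suc m))"
    have U: "unitary_pair UNIV J2 ?s ?ts" by (rule unitary_comp[OF UT(1) unitary_split_head[OF UT(1)]])
    have tl: "tl m 0 = z m" "(\<lambda>n. tl m (Suc n)) = tl (Suc m)" by (simp_all add: tl_def)
    have Y: "Y m = conj ?ts (dsum 2 (pair2 (z m) (Y (Suc m)))) ?s"
      using conj_dsum_inf_cons[where x="tl m", OF tlb UT(1)[of m] UT(1)[of "Suc m"]]
      unfolding tl by (simp add: Y_def)
    have fY: "f (Y m) = conj ?ts (dsum 2 (pair2 (f (z m)) (f (Y (Suc m))))) ?s"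
      using f_nc[OF zO YO, of ?s ?ts] U YO[of m] Y by (simp add: unitary_pair_def)
    show ?thesis
      using tnorm_summand_le_conj_dsum2[OF f_BT[OF zO[of m]] f_BT[OF YO[of "Suc m"]] U] f_BT[OF YO[of m]]
      unfolding fY[symmetric] by simp
  qed
  have mono: "Nr (f (Y m)) \<le> Nr (f (Y 0))" for m
    by (induction m) (use key in \<open>auto intro: order_trans\<close>)
  define m where "m = nat \<lceil>Nr (f (Y 0))\<rceil>"
  have "Nr (f (Y 0)) \<le> real m" unfolding m_def by linarith
  then show False using key[of m] mono[of m] z(2)[of m] by linarith
qed

end

section \<open>Local Lipschitz continuity\<close>

context nc_setting begin

lemma cmod_mult_tnorm_f_tsub_le:
  assumes y: "y \<in> \<Omega>" "y' \<in> \<Omega>" and T: "upper_tri_tup y y' (tscale c (tsub y y')) \<in> \<Omega>"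
  shows "cmod c * Nr (tsub (f y) (f y')) \<le> Nr (f (upper_tri_tup y y' (tscale c (tsub y y'))))"
proof -
  have fb: "f y \<in> BT r UNIV" "f y' \<in> BT r UNIV" using f_BT y by auto
  have "corner (f (upper_tri_tup y y' (tscale c (tsub y y')))) = tscale c (tsub (f y) (f y'))"
    unfolding f_shear_upper_tri[OF y T] by (rule corner_upper_tri_tup[OF fb tscale_BT[OF tsub_BT[OF fb]]])
  then show ?thesis using tnorm_corner_le[OF f_BT[OF T]] tnorm_scale[OF tsub_BT[OF fb]] by metis
qed

text \<open>Near a point \<open>p\<close> of \<open>\<Omega>\<^sub>k\<close>, the triangular tuple with corner of norm \<open>\<epsilon>\<^sub>2 / 3\<close> stays in
  \<open>\<Omega>\<^sub>k\<^sub>+\<^sub>1\<close>, where \<open>f\<close> is bounded by \<open>M\<close>; this yields the Lipschitz constant \<open>3 M / \<epsilon>\<^sub>2\<close>.\<close>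

lemma f_lipschitz_near_level_point:
  assumes p: "p \<in> \<Omega>s k"
  shows "\<exists>\<rho>>0. \<exists>L\<ge>0. (\<forall>y\<in>BT d UNIV. Nd (tsub y p) < \<rho> \<longrightarrow> y \<in> \<Omega>) \<and>
     (\<forall>y\<in>BT d UNIV. \<forall>y'\<in>BT d UNIV. Nd (tsub y p) < \<rho> \<longrightarrow> Nd (tsub y' p) < \<rho> \<longrightarrow>
        Nr (tsub (f y) (f y')) \<le> L * Nd (tsub y y'))"
proof -
  obtain \<epsilon>1 where e1: "\<epsilon>1 > 0" "\<And>y. y \<in> BT d UNIV \<Longrightarrow> Nd (tsub y p) < \<epsilon>1 \<Longrightarrow> y \<in> \<Omega>s (Suc k)"
    using level_interior[OF p] by blast
  obtain \<epsilon>2 where e2: "\<epsilon>2 > 0"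
    "\<And>y. y \<in> BT d UNIV \<Longrightarrow> Nd (tsub y (upper_tri_tup p p tzero)) < \<epsilon>2 \<Longrightarrow> y \<in> \<Omega>s (Suc k)"
    using level_interior[OF upper_tri_diag_in_level[OF p]] by blast
  obtain M where M: "\<And>x. x \<in> \<Omega>s (Suc k) \<Longrightarrow> Nr (f x) \<le> M" using f_bounded_on_level by blast
  have pb: "p \<in> BT d UNIV" by (rule \<Omega>_BT[OF \<Omega>s_\<Omega>[OF p]])
  have M0: "0 \<le> M" using M[OF \<Omega>s_Suc[OF p]] tnorm_nonneg[of r UNIV "f p"] by linarith
  define \<rho> where "\<rho> = min \<epsilon>1 (\<epsilon>2 / 3)"
  define L where "L = 3 * M / \<epsilon>2"
  have ball: "y \<in> \<Omega>s (Suc k)" if "y \<in> BT d UNIV" "Nd (tsub y p) < \<rho>" for y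
    using e1(2)[OF that(1)] that(2) by (simp add: \<rho>_def)
  have lip: "Nr (tsub (f y) (f y')) \<le> L * Nd (tsub y y')"
    if y: "y \<in> BT d UNIV" "y' \<in> BT d UNIV" and dy: "Nd (tsub y p) < \<rho>" "Nd (tsub y' p) < \<rho>" for y y'
  proof (cases "Nd (tsub y y') = 0")
    case True
    then show ?thesis using tnorm_tsub_eq_0_imp[OF y] by (simp add: tsub_self)
  next
    case False
    define \<delta> where "\<delta> = Nd (tsub y y')"
    have \<delta>: "\<delta> > 0" using False tnorm_nonneg[of d UNIV "tsub y y'"] by (simp add: \<delta>_def)
    let ?c = "complex_of_real (\<epsilon>2 / (3 * \<delta>))"
    have cn: "cmod ?c = \<epsilon>2 / (3 * \<delta>)" unfolding norm_of_real using e2 \<delta> by simp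
    let ?h = "tscale ?c (tsub y y')" 
    have hb: "?h \<in> BT d UNIV" by (rule tscale_BT[OF tsub_BT[OF y]])
    have "Nd ?h = \<epsilon>2 / 3" using tnorm_scale[OF tsub_BT[OF y], of ?c] cn \<delta> by (simp add: \<delta>_def)
    then have "Nd (tsub (upper_tri_tup y y' ?h) (upper_tri_tup p p tzero)) < \<epsilon>2"
      using tnorm_upper_tri_tup_tsub_diag_le[OF y hb pb] dy by (simp add: \<rho>_def)
    then have T: "upper_tri_tup y y' ?h \<in> \<Omega>s (Suc k)" using e2(2) upper_tri_tup_BT[OF y hb] by blast
    have "y \<in> \<Omega>" "y' \<in> \<Omega>" using ball[OF y(1) dy(1)] ball[OF y(2) dy(2)] \<Omega>s_\<Omega> by auto
    then have "cmod ?c * Nr (tsub (f y) (f y')) \<le> Nr (f (upper_tri_tup y y' ?h))"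
      using cmod_mult_tnorm_f_tsub_le \<Omega>s_\<Omega>[OF T] by blast
    then have "\<epsilon>2 / (3 * \<delta>) * Nr (tsub (f y) (f y')) \<le> M" using M[OF T] unfolding cn by linarith
    then show ?thesis using e2(1) \<delta> by (simp add: L_def \<delta>_def field_simps)
  qed
  have "\<rho> > 0" "L \<ge> 0" using e1 e2 M0 by (simp_all add: \<rho>_def L_def)
  then show ?thesis using ball lip \<Omega>s_\<Omega> by blast
qed

lemma f_continuous:
  "\<forall>x\<in>\<Omega>. \<forall>\<epsilon>>0. \<exists>\<delta>>0. \<forall>y\<in>\<Omega>. Nd (tsub y x) < \<delta> \<longrightarrow> Nr (tsub (f y) (f x)) < \<epsilon>"
proof (intro ballI allI impI)
  fix x \<epsilon> assume x: "x \<in> \<Omega>" and \<epsilon>: "(\<epsilon>::real) > 0"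
  obtain k where k: "x \<in> \<Omega>s k" using \<Omega>_ex[OF x] by blast
  obtain \<rho> L where rl: "\<rho> > 0" "L \<ge> 0"
    "\<forall>y\<in>BT d UNIV. \<forall>y'\<in>BT d UNIV. Nd (tsub y x) < \<rho> \<longrightarrow> Nd (tsub y' x) < \<rho> \<longrightarrow>
        Nr (tsub (f y) (f y')) \<le> L * Nd (tsub y y')"
    using f_lipschitz_near_level_point[OF k] by blast
  define \<delta> where "\<delta> = min \<rho> (\<epsilon> / (L + 1))"
  have \<delta>: "\<delta> > 0" using rl \<epsilon> by (simp add: \<delta>_def)
  have "Nr (tsub (f y) (f x)) < \<epsilon>" if y: "y \<in> \<Omega>" and dy: "Nd (tsub y x) < \<delta>" for y
  proof -
    have xb: "x \<in> BT d UNIV" and yb: "y \<in> BT d UNIV" using \<Omega>_BT x y by auto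
    have "Nr (tsub (f y) (f x)) \<le> L * Nd (tsub y x)"
      using rl(3) yb xb dy rl(1) by (simp add: tsub_self \<delta>_def)
    also have "\<dots> \<le> L * (\<epsilon> / (L + 1))" using dy rl(2) by (intro mult_left_mono) (auto simp: \<delta>_def)
    also have "\<dots> < \<epsilon>" using rl(2) \<epsilon> by (simp add: field_simps)
    finally show ?thesis .
  qed
  then show "\<exists>\<delta>>0. \<forall>y\<in>\<Omega>. Nd (tsub y x) < \<delta> \<longrightarrow> Nr (tsub (f y) (f x)) < \<epsilon>" using \<delta> by blast
qed

end

section \<open>The derivative\<close>

lemma nonpos_if_le_linear:
  fixes a K tmax :: real
  assumes "0 < tmax" "\<And>t. 0 < t \<Longrightarrow> t < tmax \<Longrightarrow> a \<le> K * t"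
  shows "a \<le> 0"
proof (rule ccontr)
  assume "\<not> a \<le> 0" then have a: "a > 0" by simp
  define t where "t = min (tmax/2) (a / (2 * (\<bar>K\<bar> + 1)))"
  have t: "0 < t" "t < tmax" using a assms(1) by (auto simp: t_def)
  have "K * t \<le> \<bar>K\<bar> * t" using t by (simp add: mult_right_mono)
  also have "\<dots> \<le> \<bar>K\<bar> * (a / (2 * (\<bar>K\<bar> + 1)))" by (rule mult_left_mono) (auto simp: t_def)
  also have "\<dots> < a" using a by (simp add: field_simps) (smt (verit) mult_nonneg_nonneg)
  finally show False using assms(2)[OF t] by linarith
qed

lemma eq_if_tnorm_tsub_le_linear:
  fixes y z :: "nat tup"
  assumes "y \<in> BT m UNIV" "z \<in> BT m UNIV" "0 < tmax"
    and "\<And>t. 0 < t \<Longrightarrow> t < tmax \<Longrightarrow> tnorm m UNIV (tsub y z) \<le> K * t"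
  shows "y = z"
proof -
  have "tnorm m UNIV (tsub y z) \<le> 0" by (rule nonpos_if_le_linear[OF assms(3,4)])
  then have "tnorm m UNIV (tsub y z) = 0" using tnorm_nonneg[of m UNIV "tsub y z"] by linarith
  then show ?thesis by (rule tnorm_tsub_eq_0_imp[OF assms(1,2)])
qed

lemma mult_less_if_less_divide_plus1:
  fixes a s N :: real
  assumes "0 \<le> N" "0 \<le> s" "s < a / (N + 1)"
  shows "s * N < a"
proof -
  have "s * N \<le> s * (N + 1)" using assms(2) by (simp add: algebra_simps)
  also have "\<dots> < a" using assms by (simp add: pos_less_divide_eq)
  finally show ?thesis .
qed

text \<open>\<open>upper_tri_tup x x tzero\<close> is \<open>x \<oplus> x\<close> transported to \<open>H\<close>.\<close>

locale nc_point = nc_setting +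
  fixes x :: "H tup" and \<rho> L \<sigma> :: real
  assumes x_in_dom: "x \<in> \<Omega>" and \<rho>_pos: "\<rho> > 0" and L_nonneg: "L \<ge> 0" and \<sigma>_pos: "\<sigma> > 0"
    and diag_ball: "\<And>y. y \<in> BT d UNIV \<Longrightarrow> Nd (tsub y (upper_tri_tup x x tzero)) < \<rho> \<Longrightarrow> y \<in> \<Omega>"
    and diag_lipschitz: "\<And>y y'. y \<in> BT d UNIV \<Longrightarrow> y' \<in> BT d UNIV \<Longrightarrow> Nd (tsub y (upper_tri_tup x x tzero)) < \<rho> \<Longrightarrow>
          Nd (tsub y' (upper_tri_tup x x tzero)) < \<rho> \<Longrightarrow> Nr (tsub (f y) (f y')) \<le> L * Nd (tsub y y')"
    and x_ball: "\<And>y. y \<in> BT d UNIV \<Longrightarrow> Nd (tsub y x) < \<sigma> \<Longrightarrow> y \<in> \<Omega>"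
begin

lemma x_BT: "x \<in> BT d UNIV" by (rule \<Omega>_BT[OF x_in_dom])

lemma line_in_dom:
  assumes "h \<in> BT d UNIV" "cmod t * Nd h < \<sigma>"
  shows "tadd x (tscale t h) \<in> \<Omega>"
  using x_ball[OF tadd_BT[OF x_BT tscale_BT[OF assms(1)]]] assms tnorm_scale[OF assms(1)] by simp

definition corner_f :: "H tup \<Rightarrow> H tup" where "corner_f w = corner (f (upper_tri_tup x x w))"

lemma upper_tri_near_diag:
  assumes "w \<in> BT d UNIV"
  shows "Nd (tsub (upper_tri_tup x x w) (upper_tri_tup x x tzero)) \<le> Nd w"
  using tnorm_upper_tri_tup_tsub_diag_le[OF x_BT x_BT assms x_BT] by (simp add: tsub_self)

lemma upper_tri_in_dom: assumes "w \<in> BT d UNIV" "Nd w < \<rho>" shows "upper_tri_tup x x w \<in> \<Omega>"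
  using diag_ball[OF upper_tri_tup_BT[OF x_BT x_BT assms(1)]] upper_tri_near_diag[OF assms(1)] assms(2) by simp

lemma corner_f_BT: assumes "w \<in> BT d UNIV" "Nd w < \<rho>" shows "corner_f w \<in> BT r UNIV"
  unfolding corner_f_def by (rule corner_BT[OF f_BT[OF upper_tri_in_dom[OF assms]]])

lemma diag_in_dom: "upper_tri_tup x x tzero \<in> \<Omega>"
  using upper_tri_in_dom[OF tzero_BT] \<rho>_pos by simp

lemma corner_f_bounded:
  assumes w: "w \<in> BT d UNIV" "Nd w < \<rho>"
  shows "Nr (corner_f w) \<le> Nr (f (upper_tri_tup x x tzero)) + L * \<rho>"
proof -
  let ?T = "upper_tri_tup x x w" and ?D = "upper_tri_tup x x tzero"
  have near: "Nd (tsub ?T ?D) < \<rho>" using upper_tri_near_diag[OF w(1)] w(2) by linarith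
  have fb: "f ?T \<in> BT r UNIV" "f ?D \<in> BT r UNIV" using f_BT upper_tri_in_dom[OF w] diag_in_dom by auto
  have "Nr (tsub (f ?T) (f ?D)) \<le> L * Nd (tsub ?T ?D)"
    by (rule diag_lipschitz[OF upper_tri_tup_BT[OF x_BT x_BT w(1)] upper_tri_tup_BT[OF x_BT x_BT tzero_BT] near])
      (simp add: tsub_self \<rho>_pos)
  also have "\<dots> \<le> L * \<rho>" using near L_nonneg by (simp add: mult_left_mono)
  finally have "Nr (tsub (f ?T) (f ?D)) \<le> L * \<rho>" .
  moreover have "Nr (f ?T) \<le> Nr (tsub (f ?T) (f ?D)) + Nr (f ?D)"
    using tnorm_tadd_le[OF tsub_BT[OF fb] fb(2)] by (simp add: tadd_def tsub_def)
  ultimately show ?thesis using tnorm_corner_le[OF fb(1)] unfolding corner_f_def by linarith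
qed

lemma corner_f_approx:
  assumes y: "y \<in> \<Omega>" and y': "y' \<in> \<Omega>" and dy: "Nd (tsub y x) < \<rho>/3" and dy': "Nd (tsub y' x) < \<rho>/3"
    and w: "Nd (tscale c (tsub y y')) < \<rho>/3"
  shows "Nr (tsub (tscale c (tsub (f y) (f y'))) (corner_f (tscale c (tsub y y')))) \<le> L * (Nd (tsub y x) + Nd (tsub y' x))"
proof -
  have yb: "y \<in> BT d UNIV" "y' \<in> BT d UNIV" using \<Omega>_BT y y' by auto
  let ?h = "tscale c (tsub y y')"
  have hb: "?h \<in> BT d UNIV" by (rule tscale_BT[OF tsub_BT[OF yb]])
  let ?T1 = "upper_tri_tup y y' ?h" and ?T2 = "upper_tri_tup x x ?h"
  have T1b: "?T1 \<in> BT d UNIV" by (rule upper_tri_tup_BT[OF yb hb])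
  have T2b: "?T2 \<in> BT d UNIV" by (rule upper_tri_tup_BT[OF x_BT x_BT hb])
  have n1: "Nd (tsub ?T1 (upper_tri_tup x x tzero)) < \<rho>"
    using tnorm_upper_tri_tup_tsub_diag_le[OF yb hb x_BT] dy dy' w by linarith
  have n2: "Nd (tsub ?T2 (upper_tri_tup x x tzero)) < \<rho>" using upper_tri_near_diag[OF hb] w \<rho>_pos by linarith
  have T1O: "?T1 \<in> \<Omega>" by (rule diag_ball[OF T1b n1])
  have fT1: "f ?T1 = upper_tri_tup (f y) (f y') (tscale c (tsub (f y) (f y')))" by (rule f_shear_upper_tri[OF y y' T1O])
  have fb: "f y \<in> BT r UNIV" "f y' \<in> BT r UNIV" using f_BT y y' by auto
  have B1: "corner (f ?T1) = tscale c (tsub (f y) (f y'))"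
    unfolding fT1 by (rule corner_upper_tri_tup[OF fb tscale_BT[OF tsub_BT[OF fb]]])
  have fT12: "f ?T1 \<in> BT r UNIV" "f ?T2 \<in> BT r UNIV" using f_BT[OF T1O] f_BT[OF upper_tri_in_dom[OF hb]] w \<rho>_pos by auto
  have "Nr (tsub (tscale c (tsub (f y) (f y'))) (corner_f ?h)) = Nr (corner (tsub (f ?T1) (f ?T2)))"
    unfolding corner_f_def B1[symmetric] corner_tsub[OF fT12] ..
  also have "\<dots> \<le> Nr (tsub (f ?T1) (f ?T2))" by (rule tnorm_corner_le[OF tsub_BT[OF fT12]])
  also have "\<dots> \<le> L * Nd (tsub ?T1 ?T2)" by (rule diag_lipschitz[OF T1b T2b n1 n2])
  also have "Nd (tsub ?T1 ?T2) \<le> Nd (tsub y x) + Nd (tsub y' x)"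
    using tnorm_upper_tri_tup_le[OF tsub_BT[OF yb(1) x_BT] tsub_BT[OF yb(2) x_BT] tsub_BT[OF hb hb]]
    by (simp add: tsub_upper_tri_tup[OF yb hb x_BT x_BT hb] tsub_self)
  finally show ?thesis using L_nonneg by (simp add: mult_left_mono)
qed

lemma diff_quotient_near_corner_f:
  assumes k: "k \<in> BT d UNIV" and c: "c \<noteq> 0" "Nd (tscale c k) < \<rho>/3" and t: "t \<noteq> 0"
    and y: "y \<in> \<Omega>" "Nd (tsub y x) < \<rho>/3"
    and y': "tadd y (tscale t k) \<in> \<Omega>" "Nd (tsub (tadd y (tscale t k)) x) < \<rho>/3"
  shows "Nr (tsub (tscale (1/t) (tsub (f (tadd y (tscale t k))) (f y))) (tscale (1/c) (corner_f (tscale c k))))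
     \<le> L * (Nd (tsub y x) + Nd (tsub (tadd y (tscale t k)) x)) / cmod c"
proof -
  let ?y' = "tadd y (tscale t k)"
  let ?e = "tsub (tscale (- c / t) (tsub (f y) (f ?y'))) (corner_f (tscale c k))"
  have "tscale (- c / t) (tsub y ?y') = tscale c k"
    using t by (auto simp: tscale_def tsub_def tadd_def fun_eq_iff)
  then have e: "Nr ?e \<le> L * (Nd (tsub y x) + Nd (tsub ?y' x))"
    using corner_f_approx[OF y(1) y'(1) y(2) y'(2), of "- c / t"] c(2) by simp
  have fb: "f y \<in> BT r UNIV" "f ?y' \<in> BT r UNIV" using f_BT y y' by auto
  have Gb: "corner_f (tscale c k) \<in> BT r UNIV" using corner_f_BT[OF tscale_BT[OF k]] c \<rho>_pos by simp
  have "tsub (tscale (1/t) (tsub (f ?y') (f y))) (tscale (1/c) (corner_f (tscale c k))) = tscale (1/c) ?e"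
    using c t by (auto simp: tscale_def tsub_def fun_eq_iff field_simps)
  then have "Nr (tsub (tscale (1/t) (tsub (f ?y') (f y))) (tscale (1/c) (corner_f (tscale c k)))) = Nr ?e / cmod c"
    using tnorm_scale[OF tsub_BT[OF tscale_BT[OF tsub_BT[OF fb]] Gb], of "1/c"] by (simp add: norm_divide)
  with e c(1) show ?thesis by (simp add: divide_right_mono)
qed

definition safe_scale :: "H tup \<Rightarrow> real" where "safe_scale h = \<rho> / (4 * (Nd h + 1))"

text \<open>The choice of the scalar \<open>safe_scale h\<close> is immaterial by \<open>scaled_corner_f_eq_Df\<close>.\<close>

definition Df :: "H tup \<Rightarrow> H tup" where
  "Df h = tscale (1 / complex_of_real (safe_scale h)) (corner_f (tscale (complex_of_real (safe_scale h)) h))"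

lemma safe_scale_pos: "safe_scale h > 0" using \<rho>_pos tnorm_nonneg[of d UNIV h] by (simp add: safe_scale_def)

lemma safe_scale_small: assumes "h \<in> BT d UNIV" shows "Nd (tscale (complex_of_real (safe_scale h)) h) < \<rho>/3"
proof -
  have "Nd (tscale (complex_of_real (safe_scale h)) h) = safe_scale h * Nd h"
    using tnorm_scale[OF assms] safe_scale_pos[of h] unfolding norm_of_real by simp
  also have "\<dots> = \<rho> / 4 * (Nd h / (Nd h + 1))" by (simp add: safe_scale_def)
  also have "\<dots> \<le> \<rho> / 4" using \<rho>_pos tnorm_nonneg[of d UNIV h] by (intro mult_left_le) auto
  finally show ?thesis using \<rho>_pos by simp
qed

lemma Df_BT: assumes "h \<in> BT d UNIV" shows "Df h \<in> BT r UNIV"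
  unfolding Df_def using corner_f_BT[OF tscale_BT[OF assms]] safe_scale_small[OF assms] \<rho>_pos by (intro tscale_BT) simp

lemma diff_quotient_near_Df:
  assumes k: "k \<in> BT d UNIV" and t: "t \<noteq> 0"
    and y: "y \<in> \<Omega>" "Nd (tsub y x) < \<rho>/3"
    and y': "tadd y (tscale t k) \<in> \<Omega>" "Nd (tsub (tadd y (tscale t k)) x) < \<rho>/3"
  shows "Nr (tsub (tscale (1/t) (tsub (f (tadd y (tscale t k))) (f y))) (Df k))
     \<le> L * (Nd (tsub y x) + Nd (tsub (tadd y (tscale t k)) x)) / safe_scale k"
  using diff_quotient_near_corner_f[OF k _ safe_scale_small[OF k] t y y'] safe_scale_pos[of k]
  unfolding Df_def by simp

lemma gateaux_limit_Df:
  assumes h: "h \<in> BT d UNIV"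
  shows "\<forall>\<epsilon>>0. \<exists>\<delta>>0. \<forall>t::complex. t \<noteq> 0 \<and> cmod t < \<delta> \<and> tadd x (tscale t h) \<in> \<Omega> \<longrightarrow>
            Nr (tsub (tscale (1 / t) (tsub (f (tadd x (tscale t h))) (f x))) (Df h)) < \<epsilon>"
proof (intro allI impI)
  fix \<epsilon> :: real assume \<epsilon>: "\<epsilon> > 0"
  have n0: "0 \<le> Nd h" by (rule tnorm_nonneg)
  define \<delta> where "\<delta> = min (\<rho> / 3 / (Nd h + 1)) (\<epsilon> * safe_scale h / (L + 1) / (Nd h + 1))"
  have \<delta>: "\<delta> > 0" using \<rho>_pos \<epsilon> safe_scale_pos[of h] n0 L_nonneg by (simp add: \<delta>_def)
  have "Nr (tsub (tscale (1 / t) (tsub (f (tadd x (tscale t h))) (f x))) (Df h)) < \<epsilon>"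
    if t: "t \<noteq> 0" "cmod t < \<delta>" and y: "tadd x (tscale t h) \<in> \<Omega>" for t :: complex
  proof -
    have tn: "Nd (tscale t h) = cmod t * Nd h" by (rule tnorm_scale[OF h])
    have t3: "cmod t * Nd h < \<rho>/3"
      by (rule mult_less_if_less_divide_plus1) (use n0 t in \<open>auto simp: \<delta>_def\<close>)
    have "Nr (tsub (tscale (1 / t) (tsub (f (tadd x (tscale t h))) (f x))) (Df h)) \<le> L * (cmod t * Nd h) / safe_scale h"
      using diff_quotient_near_Df[OF h t(1) x_in_dom _ y] t3 tn \<rho>_pos by (simp add: tsub_self)
    also have "\<dots> < \<epsilon>"
    proof -
      have "cmod t * Nd h < \<epsilon> * safe_scale h / (L + 1)"
        by (intro mult_less_if_less_divide_plus1) (use n0 t in \<open>auto simp: \<delta>_def\<close>)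
      then have "(L + 1) * (cmod t * Nd h) < \<epsilon> * safe_scale h"
        using L_nonneg by (simp add: pos_less_divide_eq mult.commute)
      moreover have "L * (cmod t * Nd h) \<le> (L + 1) * (cmod t * Nd h)" using n0 by (simp add: algebra_simps)
      ultimately show ?thesis using safe_scale_pos[of h] by (simp add: pos_divide_less_eq)
    qed
    finally show ?thesis .
  qed
  then show "\<exists>\<delta>>0. \<forall>t::complex. t \<noteq> 0 \<and> cmod t < \<delta> \<and> tadd x (tscale t h) \<in> \<Omega> \<longrightarrow>
            Nr (tsub (tscale (1 / t) (tsub (f (tadd x (tscale t h))) (f x))) (Df h)) < \<epsilon>"
    using \<delta> by blast
qed

lemma small_line_point:
  assumes h: "h \<in> BT d UNIV" and N: "Nd h \<le> N" and t: "0 < t" "t < min \<sigma> (\<rho>/3) / (N + 1)"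
  shows "tadd x (tscale (complex_of_real t) h) \<in> \<Omega>"
    and "Nd (tsub (tadd x (tscale (complex_of_real t) h)) x) = t * Nd h"
    and "t * Nd h < \<rho>/3"
proof -
  have "t * N < min \<sigma> (\<rho>/3)"
    by (rule mult_less_if_less_divide_plus1) (use N tnorm_nonneg[of d UNIV h] t in auto)
  moreover have "t * Nd h \<le> t * N" using N t by simp
  ultimately have s: "t * Nd h < \<sigma>" "t * Nd h < \<rho>/3" by linarith+
  show "tadd x (tscale (complex_of_real t) h) \<in> \<Omega>" using line_in_dom[OF h] s t by simp
  show "Nd (tsub (tadd x (tscale (complex_of_real t) h)) x) = t * Nd h" using tnorm_scale[OF h] t by simp
  show "t * Nd h < \<rho>/3" by (rule s(2))
qed

lemma scaled_corner_f_eq_Df: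
  assumes h: "h \<in> BT d UNIV" and c: "c \<noteq> 0" "Nd (tscale c h) < \<rho>/3"
  shows "tscale (1/c) (corner_f (tscale c h)) = Df h"
proof (rule eq_if_tnorm_tsub_le_linear)
  let ?A = "tscale (1/c) (corner_f (tscale c h))"
  show A: "?A \<in> BT r UNIV" using corner_f_BT[OF tscale_BT[OF h]] c \<rho>_pos by (intro tscale_BT) simp
  show B: "Df h \<in> BT r UNIV" by (rule Df_BT[OF h])
  show "0 < min \<sigma> (\<rho>/3) / (Nd h + 1)" using \<sigma>_pos \<rho>_pos tnorm_nonneg[of d UNIV h] by simp
  fix t :: real assume t: "0 < t" "t < min \<sigma> (\<rho>/3) / (Nd h + 1)"
  let ?t = "complex_of_real t" and ?y = "tadd x (tscale (complex_of_real t) h)"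
  note y = small_line_point[OF h order_refl t]
  let ?q = "tscale (1 / ?t) (tsub (f ?y) (f x))"
  have qb: "?q \<in> BT r UNIV" using f_BT[OF y(1)] f_BT[OF x_in_dom] by (intro tscale_BT tsub_BT)
  have q1: "Nr (tsub ?q ?A) \<le> L * (t * Nd h) / cmod c"
    using diff_quotient_near_corner_f[OF h c _ x_in_dom _ y(1)] y(2,3) t \<rho>_pos by (simp add: tsub_self)
  have q2: "Nr (tsub ?q (Df h)) \<le> L * (t * Nd h) / safe_scale h"
    using diff_quotient_near_Df[OF h _ x_in_dom _ y(1)] y(2,3) t \<rho>_pos by (simp add: tsub_self)
  have "Nr (tsub ?A (Df h)) \<le> Nr (tsub ?q ?A) + Nr (tsub ?q (Df h))"
    using tnorm_tsub_triangle[OF A qb B] tnorm_tsub_commute[OF A qb] by simp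
  also have "\<dots> \<le> (L * Nd h / cmod c + L * Nd h / safe_scale h) * t" using q1 q2 by (simp add: algebra_simps)
  finally show "Nr (tsub ?A (Df h)) \<le> (L * Nd h / cmod c + L * Nd h / safe_scale h) * t" .
qed

lemma f_diag: "f (upper_tri_tup x x tzero) = upper_tri_tup (f x) (f x) tzero"
  using f_shear_upper_tri[OF x_in_dom x_in_dom, of 0] diag_in_dom by simp

lemma Df_tzero: "Df tzero = tzero"
proof -
  have "corner_f tzero = tzero"
    unfolding corner_f_def f_diag by (rule corner_upper_tri_tup[OF f_BT[OF x_in_dom] f_BT[OF x_in_dom] tzero_BT])
  then show ?thesis by (simp add: Df_def)
qed

lemma Df_scale: assumes h: "h \<in> BT d UNIV" shows "Df (tscale a h) = tscale a (Df h)"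
proof (cases "a = 0")
  case True then show ?thesis using Df_tzero by simp
next
  case False
  let ?h = "tscale a h"
  let ?s = "complex_of_real (safe_scale ?h)"
  have e: "tscale ?s ?h = tscale (?s * a) h" by (simp add: tscale_def mult.assoc)
  have c: "?s * a \<noteq> 0" using False safe_scale_pos[of ?h] by simp
  have "tscale (1 / (?s * a)) (corner_f (tscale (?s * a) h)) = Df h"
    by (rule scaled_corner_f_eq_Df[OF h c]) (use safe_scale_small[OF tscale_BT[OF h, of a]] e in simp)
  moreover have "Df ?h = tscale a (tscale (1 / (?s * a)) (corner_f (tscale (?s * a) h)))"
    unfolding Df_def e using False safe_scale_pos[of ?h] by (auto simp: tscale_def fun_eq_iff)
  ultimately show ?thesis by simp
qed

text \<open>Additivity: with \<open>y\<^sub>1 = x + t h\<close> and \<open>y\<^sub>2 = y\<^sub>1 + t k = x + t (h + k)\<close>, the quotient of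
  \<open>h + k\<close> at \<open>x\<close> is the sum of the quotients of \<open>h\<close> at \<open>x\<close> and of \<open>k\<close> at \<open>y\<^sub>1\<close>, and each
  of the three is within \<open>O(t)\<close> of the corresponding value of \<open>Df\<close>.\<close>

lemma Df_add: assumes h: "h \<in> BT d UNIV" and k: "k \<in> BT d UNIV" shows "Df (tadd h k) = tadd (Df h) (Df k)"
proof (rule eq_if_tnorm_tsub_le_linear)
  let ?s = "tadd h k"
  have sb: "?s \<in> BT d UNIV" by (rule tadd_BT[OF h k])
  define N where "N = Nd h + Nd ?s"
  have N: "Nd h \<le> N" "Nd ?s \<le> N" using tnorm_nonneg[of d UNIV h] tnorm_nonneg[of d UNIV ?s] by (auto simp: N_def)
  show Db: "Df ?s \<in> BT r UNIV" "tadd (Df h) (Df k) \<in> BT r UNIV" using Df_BT h k sb by (auto intro: tadd_BT)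
  show "0 < min \<sigma> (\<rho>/3) / (N + 1)" using \<sigma>_pos \<rho>_pos N tnorm_nonneg[of d UNIV h] by simp
  fix t :: real assume t: "0 < t" "t < min \<sigma> (\<rho>/3) / (N + 1)"
  let ?t = "complex_of_real t"
  let ?y1 = "tadd x (tscale ?t h)" and ?y2 = "tadd x (tscale ?t ?s)"
  note y1 = small_line_point[OF h N(1) t] and y2 = small_line_point[OF sb N(2) t]
  have y12: "tadd ?y1 (tscale ?t k) = ?y2" by (auto simp: tadd_def tscale_def fun_eq_iff algebra_simps)
  have fb: "f x \<in> BT r UNIV" "f ?y1 \<in> BT r UNIV" "f ?y2 \<in> BT r UNIV" using f_BT x_in_dom y1(1) y2(1) by auto
  let ?q1 = "tscale (1 / ?t) (tsub (f ?y1) (f x))" and ?q2 = "tscale (1 / ?t) (tsub (f ?y2) (f ?y1))"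
    and ?q = "tscale (1 / ?t) (tsub (f ?y2) (f x))"
  have t_nz: "?t \<noteq> 0" using t by simp
  have "Nr (tsub ?q1 (Df h)) \<le> L * (t * Nd h) / safe_scale h"
    using diff_quotient_near_Df[OF h t_nz x_in_dom _ y1(1)] y1(2,3) \<rho>_pos by (simp add: tsub_self)
  then have a1: "Nr (tsub ?q1 (Df h)) \<le> L * Nd h / safe_scale h * t" by (simp add: ac_simps)
  have "Nr (tsub ?q2 (Df k)) \<le> L * (t * Nd h + t * Nd ?s) / safe_scale k"
    using diff_quotient_near_Df[OF k t_nz y1(1) _ _] y12 y1(2,3) y2 by simp
  then have a2: "Nr (tsub ?q2 (Df k)) \<le> L * (Nd h + Nd ?s) / safe_scale k * t" by (simp add: algebra_simps)
  have "Nr (tsub ?q (Df ?s)) \<le> L * (t * Nd ?s) / safe_scale ?s"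
    using diff_quotient_near_Df[OF sb t_nz x_in_dom _ y2(1)] y2(2,3) \<rho>_pos by (simp add: tsub_self)
  then have a3: "Nr (tsub ?q (Df ?s)) \<le> L * Nd ?s / safe_scale ?s * t" by (simp add: ac_simps)
  have qb: "?q1 \<in> BT r UNIV" "?q2 \<in> BT r UNIV" "?q \<in> BT r UNIV" using fb by (auto intro: tscale_BT tsub_BT)
  have Db': "Df h \<in> BT r UNIV" "Df k \<in> BT r UNIV" using Df_BT h k by auto
  have eq: "tsub (Df ?s) (tadd (Df h) (Df k)) = tsub (tadd (tsub ?q1 (Df h)) (tsub ?q2 (Df k))) (tsub ?q (Df ?s))"
    using t by (auto simp: tsub_def tadd_def tscale_def fun_eq_iff field_simps)
  have eb: "tsub ?q1 (Df h) \<in> BT r UNIV" "tsub ?q2 (Df k) \<in> BT r UNIV" "tsub ?q (Df ?s) \<in> BT r UNIV"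
    using qb Db Db' by (auto intro: tsub_BT)
  have "Nr (tsub (Df ?s) (tadd (Df h) (Df k))) \<le> Nr (tsub ?q1 (Df h)) + Nr (tsub ?q2 (Df k)) + Nr (tsub ?q (Df ?s))"
    unfolding eq using tnorm_tsub_le[OF tadd_BT[OF eb(1,2)] eb(3)] tnorm_tadd_le[OF eb(1,2)] by linarith
  then show "Nr (tsub (Df ?s) (tadd (Df h) (Df k)))
      \<le> (L * Nd h / safe_scale h + L * (Nd h + Nd ?s) / safe_scale k + L * Nd ?s / safe_scale ?s) * t"
    using a1 a2 a3 unfolding distrib_right by linarith
qed

lemma Df_eq_quarter_scale:
  assumes h: "h \<in> BT d UNIV" and hp: "Nd h > 0"
  shows "Df h = tscale (complex_of_real (4 * Nd h / \<rho>)) (corner_f (tscale (complex_of_real (\<rho> / (4 * Nd h))) h))"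
    and "Nd (tscale (complex_of_real (\<rho> / (4 * Nd h))) h) = \<rho> / 4"
proof -
  let ?c = "complex_of_real (\<rho> / (4 * Nd h))"
  show n: "Nd (tscale ?c h) = \<rho> / 4" using tnorm_scale[OF h, of ?c] \<rho>_pos hp unfolding norm_of_real by simp
  have "tscale (1/?c) (corner_f (tscale ?c h)) = Df h"
    by (rule scaled_corner_f_eq_Df[OF h]) (use \<rho>_pos hp n in auto)
  then show "Df h = tscale (complex_of_real (4 * Nd h / \<rho>)) (corner_f (tscale ?c h))" by simp
qed

lemma Df_bounded: "\<exists>C. \<forall>h\<in>BT d UNIV. Nr (Df h) \<le> C * Nd h"
proof -
  define M where "M = Nr (f (upper_tri_tup x x tzero)) + L * \<rho>"
  have "Nr (Df h) \<le> (4 * M / \<rho>) * Nd h" if h: "h \<in> BT d UNIV" for h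
  proof (cases "Nd h = 0")
    case True
    then show ?thesis using tnorm_eq_0_imp[OF h] by (simp add: Df_tzero)
  next
    case False
    then have hp: "Nd h > 0" using tnorm_nonneg[of d UNIV h] by linarith
    let ?w = "tscale (complex_of_real (\<rho> / (4 * Nd h))) h"
    note D = Df_eq_quarter_scale[OF h hp]
    have w: "?w \<in> BT d UNIV" "Nd ?w < \<rho>" using tscale_BT[OF h] D(2) \<rho>_pos by auto
    have "cmod (complex_of_real (4 * Nd h / \<rho>)) = 4 * Nd h / \<rho>"
      unfolding norm_of_real using \<rho>_pos hp by simp
    then have "Nr (Df h) = 4 * Nd h / \<rho> * Nr (corner_f ?w)"
      unfolding D(1) using tnorm_scale[OF corner_f_BT[OF w]] by metis
    also have "\<dots> \<le> 4 * Nd h / \<rho> * M"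
      using corner_f_bounded[OF w] \<rho>_pos hp by (intro mult_left_mono) (auto simp: M_def)
    finally show ?thesis by (simp add: ac_simps)
  qed
  then show ?thesis by blast
qed

lemma frechet_remainder_Df:
  assumes \<epsilon>: "\<epsilon> > 0"
  shows "\<exists>\<delta>>0. \<forall>h\<in>BT d UNIV. Nd h < \<delta> \<and> tadd x h \<in> \<Omega> \<longrightarrow>
           Nr (tsub (tsub (f (tadd x h)) (f x)) (Df h)) \<le> \<epsilon> * Nd h"
proof -
  define \<delta> where "\<delta> = min (\<rho> / 3) (\<epsilon> * \<rho> / (4 * (L + 1)))"
  have \<delta>: "\<delta> > 0" using \<epsilon> \<rho>_pos L_nonneg by (simp add: \<delta>_def)
  have "Nr (tsub (tsub (f (tadd x h)) (f x)) (Df h)) \<le> \<epsilon> * Nd h"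
    if h: "h \<in> BT d UNIV" and hd: "Nd h < \<delta>" and y: "tadd x h \<in> \<Omega>" for h
  proof (cases "Nd h = 0")
    case True
    then show ?thesis using tnorm_eq_0_imp[OF h] by (simp add: Df_tzero tsub_self)
  next
    case False
    then have hp: "Nd h > 0" using tnorm_nonneg[of d UNIV h] by linarith
    let ?c = "complex_of_real (\<rho> / (4 * Nd h))"
    note D = Df_eq_quarter_scale[OF h hp]
    have c: "cmod ?c = \<rho> / (4 * Nd h)" unfolding norm_of_real using \<rho>_pos hp by simp
    have "Nr (tsub (tsub (f (tadd x h)) (f x)) (Df h)) \<le> L * Nd h / cmod ?c"
      using diff_quotient_near_corner_f[OF h _ _ one_neq_zero x_in_dom _ _, of ?c] D y hd \<rho>_pos hp
      by (simp add: tsub_self \<delta>_def)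
    also have "\<dots> = (4 * L * Nd h / \<rho>) * Nd h" using \<rho>_pos hp unfolding c by simp
    also have "\<dots> \<le> \<epsilon> * Nd h"
    proof (rule mult_right_mono)
      have "4 * L * Nd h \<le> 4 * L * (\<epsilon> * \<rho> / (4 * (L + 1)))"
        using hd L_nonneg by (intro mult_left_mono) (auto simp: \<delta>_def)
      also have "\<dots> \<le> \<epsilon> * \<rho>" using L_nonneg \<epsilon> \<rho>_pos by (simp add: field_simps)
      finally show "4 * L * Nd h / \<rho> \<le> \<epsilon>" using \<rho>_pos by (simp add: divide_le_eq)
    qed (use hp in simp)
    finally show ?thesis .
  qed
  then show ?thesis using \<delta> by blast
qed

lemma frechet_derivative_exists: "\<exists>D :: H tup \<Rightarrow> H tup.
            (\<forall>h\<in>BT d UNIV. D h \<in> BT r UNIV)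
          \<and> (\<forall>h\<in>BT d UNIV. \<forall>k\<in>BT d UNIV. \<forall>a b.
               D (tadd (tscale a h) (tscale b k)) = tadd (tscale a (D h)) (tscale b (D k)))
          \<and> (\<exists>C. \<forall>h\<in>BT d UNIV. Nr (D h) \<le> C * Nd h)
          \<and> (\<forall>\<epsilon>>0. \<exists>\<delta>>0. \<forall>h\<in>BT d UNIV. Nd h < \<delta> \<and> tadd x h \<in> \<Omega> \<longrightarrow>
               Nr (tsub (tsub (f (tadd x h)) (f x)) (D h)) \<le> \<epsilon> * Nd h)"
proof (intro exI[of _ Df] conjI ballI allI impI)
  show "Df (tadd (tscale a h) (tscale b k)) = tadd (tscale a (Df h)) (tscale b (Df k))"
    if "h \<in> BT d UNIV" "k \<in> BT d UNIV" for h k a b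
    using Df_add[OF tscale_BT[OF that(1)] tscale_BT[OF that(2)]] Df_scale[OF that(1)] Df_scale[OF that(2)] by simp
qed (use Df_BT Df_bounded frechet_remainder_Df in auto)

end

context nc_setting begin

lemma nc_point_exists: assumes x: "x \<in> \<Omega>" shows "\<exists>\<rho> L \<sigma>. nc_point d r \<Omega> f \<Omega>s x \<rho> L \<sigma>"
proof -
  obtain k where k: "x \<in> \<Omega>s k" using \<Omega>_ex[OF x] by blast
  obtain \<rho> L where rl: "\<rho> > 0" "L \<ge> 0"
    "\<forall>y\<in>BT d UNIV. Nd (tsub y (upper_tri_tup x x tzero)) < \<rho> \<longrightarrow> y \<in> \<Omega>"
    "\<forall>y\<in>BT d UNIV. \<forall>y'\<in>BT d UNIV. Nd (tsub y (upper_tri_tup x x tzero)) < \<rho> \<longrightarrow> Nd (tsub y' (upper_tri_tup x x tzero)) < \<rho> \<longrightarrow>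
        Nr (tsub (f y) (f y')) \<le> L * Nd (tsub y y')"
    using f_lipschitz_near_level_point[OF upper_tri_diag_in_level[OF k]] by blast
  obtain \<sigma> where \<sigma>: "\<sigma> > 0" "\<forall>y\<in>BT d UNIV. Nd (tsub y x) < \<sigma> \<longrightarrow> y \<in> \<Omega>s (Suc k)"
    using level_interior[OF k] by blast
  have "nc_point d r \<Omega> f \<Omega>s x \<rho> L \<sigma>"
    by unfold_locales (use x rl \<sigma> \<Omega>s_\<Omega> in auto)
  then show ?thesis by blast
qed

lemma gateaux_differentiable:
  assumes "x \<in> \<Omega>" and "h \<in> BT d UNIV"
  shows "\<exists>L\<in>BT r UNIV. \<forall>\<epsilon>>0. \<exists>\<delta>>0. \<forall>t::complex.
            t \<noteq> 0 \<and> cmod t < \<delta> \<and> tadd x (tscale t h) \<in> \<Omega> \<longrightarrow>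
            Nr (tsub (tscale (1 / t) (tsub (f (tadd x (tscale t h))) (f x))) L) < \<epsilon>"
proof -
  obtain \<rho> L \<sigma> where "nc_point d r \<Omega> f \<Omega>s x \<rho> L \<sigma>" using nc_point_exists[OF assms(1)] by blast
  then interpret nc_point d r \<Omega> f \<Omega>s x \<rho> L \<sigma> .
  show ?thesis using gateaux_limit_Df[OF assms(2)] Df_BT[OF assms(2)] by blast
qed

lemma frechet_differentiable:
  assumes "x \<in> \<Omega>"
  shows "\<exists>D :: H tup \<Rightarrow> H tup.
            (\<forall>h\<in>BT d UNIV. D h \<in> BT r UNIV)
          \<and> (\<forall>h\<in>BT d UNIV. \<forall>k\<in>BT d UNIV. \<forall>a b.
               D (tadd (tscale a h) (tscale b k)) = tadd (tscale a (D h)) (tscale b (D k)))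
          \<and> (\<exists>C. \<forall>h\<in>BT d UNIV. Nr (D h) \<le> C * Nd h)
          \<and> (\<forall>\<epsilon>>0. \<exists>\<delta>>0. \<forall>h\<in>BT d UNIV. Nd h < \<delta> \<and> tadd x h \<in> \<Omega> \<longrightarrow>
               Nr (tsub (tsub (f (tadd x h)) (f x)) (D h)) \<le> \<epsilon> * Nd h)"
proof -
  obtain \<rho> L \<sigma> where "nc_point d r \<Omega> f \<Omega>s x \<rho> L \<sigma>" using nc_point_exists[OF assms] by blast
  then interpret nc_point d r \<Omega> f \<Omega>s x \<rho> L \<sigma> .
  show ?thesis by (rule frechet_derivative_exists)
qed

end

theorem lemma3p2:
  fixes d r :: nat and \<Omega> :: "H tup set" and f :: "H tup \<Rightarrow> H tup"
  assumes "nc_domain d \<Omega>" and "nc_function d r \<Omega> f"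
  shows "(\<forall>x\<in>\<Omega>. \<forall>\<epsilon>>0. \<exists>\<delta>>0. \<forall>y\<in>\<Omega>.
            tnorm d UNIV (tsub y x) < \<delta> \<longrightarrow> tnorm r UNIV (tsub (f y) (f x)) < \<epsilon>)
       \<and> (\<forall>x\<in>\<Omega>. \<forall>h\<in>BT d UNIV. \<exists>L\<in>BT r UNIV. \<forall>\<epsilon>>0. \<exists>\<delta>>0. \<forall>t::complex.
            t \<noteq> 0 \<and> cmod t < \<delta> \<and> tadd x (tscale t h) \<in> \<Omega> \<longrightarrow>
            tnorm r UNIV (tsub (tscale (1 / t) (tsub (f (tadd x (tscale t h))) (f x))) L) < \<epsilon>)
       \<and> (\<forall>x\<in>\<Omega>. \<exists>D :: H tup \<Rightarrow> H tup.
            (\<forall>h\<in>BT d UNIV. D h \<in> BT r UNIV)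
          \<and> (\<forall>h\<in>BT d UNIV. \<forall>k\<in>BT d UNIV. \<forall>a b.
               D (tadd (tscale a h) (tscale b k)) = tadd (tscale a (D h)) (tscale b (D k)))
          \<and> (\<exists>C. \<forall>h\<in>BT d UNIV. tnorm r UNIV (D h) \<le> C * tnorm d UNIV h)
          \<and> (\<forall>\<epsilon>>0. \<exists>\<delta>>0. \<forall>h\<in>BT d UNIV. tnorm d UNIV h < \<delta> \<and> tadd x h \<in> \<Omega> \<longrightarrow>
               tnorm r UNIV (tsub (tsub (f (tadd x h)) (f x)) (D h)) \<le> \<epsilon> * tnorm d UNIV h))"
proof -
  obtain \<Omega>s where "nc_setting d r \<Omega> f \<Omega>s" using nc_setting_exists[OF assms] by blast
  then interpret nc_setting d r \<Omega> f \<Omega>s .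
  show ?thesis using f_continuous gateaux_differentiable frechet_differentiable by blast
qed

end
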